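(* Let $(V,m)$ be a discrete measure space and $(b,c)$ a connected graph over $(V,m)$. If there exists $f\in D(Q^{(N)})$ with $f_\infty\neq0$, then $Q^{(N)}\neq Q^{(D)}$. If, moreover, (FC) holds, i.e. $\widetilde L C_c(V)\subseteq\ell^2(V,m)$, then the restriction of $\widetilde L$ to $C_c(V)$ is not essentially selfadjoint in $\ell^2(V,m)$.
   Context: $V$ is a finite or countably infinite set and $m:V\to(0,\infty)$; $(V,m)$ is a discrete measure space. $C(V)$ is the set of all functions $V\to\mathbb C$, $C_c(V)$ the finitely supported ones, and $\ell^2(V,m)$ carries $\langle u,v\rangle=\sum_x u(x)\overline{v(x)}m(x)$. A graph over $(V,m)$ is a pair $(b,c)$ with $c:V\to[0,\infty)$, $b:V\times V\to[0,\infty)$, $b(x,x)=0$, $b(x,y)=b(y,x)$, $\sum_y b(x,y)<\infty$. A path from $x$ to $y$ is a finite sequence $x=x_1,\dots,x_n=y$ with $b(x_j,x_{j+1})>0$; the graph is connected if any two vertices are joined by a path. Let $\widetilde F=\{u\in C(V):\sum_y|b(x,y)u(y)|<\infty\ \forall x\}$ and $\widetilde L u(x)=\frac{1}{m(x)}\sum_y b(x,y)(u(x)-u(y))+\frac{c(x)}{m(x)}u(x)$ for $u\in\widetilde F$. $Q^{(N)}$ is the form on $\ell^2(V,m)$ with domain $D(Q^{(N)})=\{u\in\ell^2(V,m):\frac12\sum_{x,y}b(x,y)|u(x)-u(y)|^2+\sum_x c(x)|u(x)|^2<\infty\}$ and $Q^{(N)}(u,v)=\frac12\sum_{x,y}b(x,y)(u(x)-u(y))\overline{(v(x)-v(y))}+\sum_x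 c(x)u(x)\overline{v(x)}$. $Q^{(D)}$ is the closure of the restriction of $Q^{(N)}$ to $C_c(V)$. The length of a path $\gamma=(x_1,\dots,x_n)$ is $L(\gamma)=\sum_{j=1}^{n-1}b(x_j,x_{j+1})^{-1/2}$ and $d(x,y)=\inf\{L(\gamma):\gamma\text{ a path from }x\text{ to }y\}$, a metric on $V$. $\widehat V$ is the metric completion of $(V,d)$ and $V_\infty=\widehat V\setminus V$. Every $u\in D(Q^{(N)})$ satisfies $|u(x)-u(y)|\le Q^{(N)}(u,u)^{1/2}d(x,y)$ and extends uniquely to a Lipschitz function $\widehat u$ on $\widehat V$; $u_\infty$ is the restriction of $\widehat u$ to $V_\infty$ (and $u_\infty:=0$ if $V_\infty=\emptyset$). *)

theory Defs
  imports "HOL-Analysis.Analysis"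
begin

text \<open>Vertex set V is the (countable, i.e. finite or countably infinite) type 'v.
  Functions V -> C are of type 'v => complex.\<close>

definition graph_over :: "('v \<Rightarrow> real) \<Rightarrow> ('v \<Rightarrow> 'v \<Rightarrow> real) \<Rightarrow> ('v \<Rightarrow> real) \<Rightarrow> bool" where
  "graph_over m b c \<longleftrightarrow>
     (\<forall>x. m x > 0) \<and> (\<forall>x. c x \<ge> 0) \<and> (\<forall>x y. b x y \<ge> 0) \<and>
     (\<forall>x. b x x = 0) \<and> (\<forall>x y. b x y = b y x) \<and> (\<forall>x. (\<lambda>y. b x y) summable_on UNIV)"

definition is_path :: "('v \<Rightarrow> 'v \<Rightarrow> real) \<Rightarrow> 'v list \<Rightarrow> 'v \<Rightarrow> 'v \<Rightarrow> bool" where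
  "is_path b xs x y \<longleftrightarrow> xs \<noteq> [] \<and> hd xs = x \<and> last xs = y \<and>
     (\<forall>i < length xs - 1. b (xs ! i) (xs ! (i + 1)) > 0)"

definition connected_graph :: "('v \<Rightarrow> 'v \<Rightarrow> real) \<Rightarrow> bool" where
  "connected_graph b \<longleftrightarrow> (\<forall>x y. \<exists>xs. is_path b xs x y)"

definition Cc :: "('v \<Rightarrow> complex) set" where
  "Cc = {u. finite {x. u x \<noteq> 0}}"

definition l2 :: "('v \<Rightarrow> real) \<Rightarrow> ('v \<Rightarrow> complex) set" where
  "l2 m = {u. (\<lambda>x. (cmod (u x))\<^sup>2 * m x) summable_on UNIV}"

definition l2norm :: "('v \<Rightarrow> real) \<Rightarrow> ('v \<Rightarrow> complex) \<Rightarrow> real" where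
  "l2norm m u = sqrt (\<Sum>\<^sub>\<infinity>x. (cmod (u x))\<^sup>2 * m x)"

definition inner_l2 :: "('v \<Rightarrow> real) \<Rightarrow> ('v \<Rightarrow> complex) \<Rightarrow> ('v \<Rightarrow> complex) \<Rightarrow> complex" where
  "inner_l2 m u v = (\<Sum>\<^sub>\<infinity>x. u x * cnj (v x) * complex_of_real (m x))"

definition Ltilde :: "('v \<Rightarrow> real) \<Rightarrow> ('v \<Rightarrow> 'v \<Rightarrow> real) \<Rightarrow> ('v \<Rightarrow> real)
    \<Rightarrow> ('v \<Rightarrow> complex) \<Rightarrow> ('v \<Rightarrow> complex)" where
  "Ltilde m b c u = (\<lambda>x. complex_of_real (1 / m x) *
        (\<Sum>\<^sub>\<infinity>y. complex_of_real (b x y) * (u x - u y))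
      + complex_of_real (c x / m x) * u x)"

definition FC :: "('v \<Rightarrow> real) \<Rightarrow> ('v \<Rightarrow> 'v \<Rightarrow> real) \<Rightarrow> ('v \<Rightarrow> real) \<Rightarrow> bool" where
  "FC m b c \<longleftrightarrow> (\<forall>\<phi>\<in>Cc. Ltilde m b c \<phi> \<in> l2 m)"

text \<open>A (sesquilinear) form on l^2 is represented by its domain together with its values;
  values outside the domain are normalised to 0 so that equality of forms is equality of
  domains and of values on the domain.\<close>

type_synonym 'v form = "('v \<Rightarrow> complex) set \<times> (('v \<Rightarrow> complex) \<Rightarrow> ('v \<Rightarrow> complex) \<Rightarrow> complex)"

definition QN_dom :: "('v \<Rightarrow> real) \<Rightarrow> ('v \<Rightarrow> 'v \<Rightarrow> real) \<Rightarrow> ('v \<Rightarrow> real) \<Rightarrow> ('v \<Rightarrow> complex) set" where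
  "QN_dom m b c = {u \<in> l2 m.
      (\<lambda>(x, y). b x y * (cmod (u x - u y))\<^sup>2) summable_on UNIV \<and>
      (\<lambda>x. c x * (cmod (u x))\<^sup>2) summable_on UNIV}"

definition QN_val :: "('v \<Rightarrow> 'v \<Rightarrow> real) \<Rightarrow> ('v \<Rightarrow> real) \<Rightarrow> ('v \<Rightarrow> complex) \<Rightarrow> ('v \<Rightarrow> complex) \<Rightarrow> complex" where
  "QN_val b c u v =
     (1 / 2) * (\<Sum>\<^sub>\<infinity>(x, y). complex_of_real (b x y) * (u x - u y) * cnj (v x - v y))
     + (\<Sum>\<^sub>\<infinity>x. complex_of_real (c x) * u x * cnj (v x))"

definition QN_form :: "('v \<Rightarrow> real) \<Rightarrow> ('v \<Rightarrow> 'v \<Rightarrow> real) \<Rightarrow> ('v \<Rightarrow> real) \<Rightarrow> 'v form" where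
  "QN_form m b c = (QN_dom m b c,
     \<lambda>u v. if u \<in> QN_dom m b c \<and> v \<in> QN_dom m b c then QN_val b c u v else 0)"

text \<open>phi is an approximating sequence for u in the closure of Q^(N) restricted to C_c:
  phi_n in C_c, phi_n -> u in l^2, and phi_n is Cauchy w.r.t. Q^(N).\<close>
definition approx_seq :: "('v \<Rightarrow> real) \<Rightarrow> ('v \<Rightarrow> 'v \<Rightarrow> real) \<Rightarrow> ('v \<Rightarrow> real)
    \<Rightarrow> (nat \<Rightarrow> 'v \<Rightarrow> complex) \<Rightarrow> ('v \<Rightarrow> complex) \<Rightarrow> bool" where
  "approx_seq m b c \<phi> u \<longleftrightarrow> u \<in> l2 m \<and> (\<forall>n. \<phi> n \<in> Cc) \<and>
     (\<lambda>n. l2norm m (\<phi> n - u)) \<longlonglongrightarrow> 0 \<and>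
     (\<forall>\<epsilon>>0. \<exists>N. \<forall>k\<ge>N. \<forall>l\<ge>N. Re (QN_val b c (\<phi> k - \<phi> l) (\<phi> k - \<phi> l)) < \<epsilon>)"

definition QD_dom :: "('v \<Rightarrow> real) \<Rightarrow> ('v \<Rightarrow> 'v \<Rightarrow> real) \<Rightarrow> ('v \<Rightarrow> real) \<Rightarrow> ('v \<Rightarrow> complex) set" where
  "QD_dom m b c = {u \<in> l2 m. \<exists>\<phi>. approx_seq m b c \<phi> u}"

definition QD_val :: "('v \<Rightarrow> real) \<Rightarrow> ('v \<Rightarrow> 'v \<Rightarrow> real) \<Rightarrow> ('v \<Rightarrow> real)
    \<Rightarrow> ('v \<Rightarrow> complex) \<Rightarrow> ('v \<Rightarrow> complex) \<Rightarrow> complex" where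
  "QD_val m b c u v = (THE z. \<forall>\<phi> \<psi>. approx_seq m b c \<phi> u \<longrightarrow> approx_seq m b c \<psi> v \<longrightarrow>
       (\<lambda>n. QN_val b c (\<phi> n) (\<psi> n)) \<longlonglongrightarrow> z)"

definition QD_form :: "('v \<Rightarrow> real) \<Rightarrow> ('v \<Rightarrow> 'v \<Rightarrow> real) \<Rightarrow> ('v \<Rightarrow> real) \<Rightarrow> 'v form" where
  "QD_form m b c = (QD_dom m b c,
     \<lambda>u v. if u \<in> QD_dom m b c \<and> v \<in> QD_dom m b c then QD_val m b c u v else 0)"

definition path_length :: "('v \<Rightarrow> 'v \<Rightarrow> real) \<Rightarrow> 'v list \<Rightarrow> real" where
  "path_length b xs = (\<Sum>i < length xs - 1. 1 / sqrt (b (xs ! i) (xs ! (i + 1))))"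

definition dist_b :: "('v \<Rightarrow> 'v \<Rightarrow> real) \<Rightarrow> 'v \<Rightarrow> 'v \<Rightarrow> real" where
  "dist_b b x y = Inf {path_length b xs | xs. is_path b xs x y}"

definition d_Cauchy :: "('v \<Rightarrow> 'v \<Rightarrow> real) \<Rightarrow> (nat \<Rightarrow> 'v) \<Rightarrow> bool" where
  "d_Cauchy b xs \<longleftrightarrow> (\<forall>\<epsilon>>0. \<exists>N. \<forall>k\<ge>N. \<forall>l\<ge>N. dist_b b (xs k) (xs l) < \<epsilon>)"

text \<open>Points of V_infinity = completion minus V are represented by d-Cauchy sequences in V
  that do not converge to a point of V.\<close>
definition boundary_seq :: "('v \<Rightarrow> 'v \<Rightarrow> real) \<Rightarrow> (nat \<Rightarrow> 'v) \<Rightarrow> bool" where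
  "boundary_seq b xs \<longleftrightarrow> d_Cauchy b xs \<and> \<not> (\<exists>x. (\<lambda>n. dist_b b (xs n) x) \<longlonglongrightarrow> 0)"

text \<open>u_infinity: the value of the Lipschitz extension at the boundary point represented
  by xs is the limit of u along xs; 0 on non-boundary sequences (so u_infinity = 0 when
  V_infinity is empty).\<close>
definition u_infty :: "('v \<Rightarrow> 'v \<Rightarrow> real) \<Rightarrow> ('v \<Rightarrow> complex) \<Rightarrow> (nat \<Rightarrow> 'v) \<Rightarrow> complex" where
  "u_infty b u = (\<lambda>xs. if boundary_seq b xs then lim (\<lambda>n. u (xs n)) else 0)"

definition Cc_graph :: "('v \<Rightarrow> real) \<Rightarrow> ('v \<Rightarrow> 'v \<Rightarrow> real) \<Rightarrow> ('v \<Rightarrow> real)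
    \<Rightarrow> (('v \<Rightarrow> complex) \<times> ('v \<Rightarrow> complex)) set" where
  "Cc_graph m b c = {(\<phi>, Ltilde m b c \<phi>) | \<phi>. \<phi> \<in> Cc}"

definition graph_closure :: "('v \<Rightarrow> real) \<Rightarrow> (('v \<Rightarrow> complex) \<times> ('v \<Rightarrow> complex)) set
    \<Rightarrow> (('v \<Rightarrow> complex) \<times> ('v \<Rightarrow> complex)) set" where
  "graph_closure m G = {(u, v). u \<in> l2 m \<and> v \<in> l2 m \<and>
     (\<exists>s. (\<forall>n. s n \<in> G) \<and> (\<lambda>n. l2norm m (fst (s n) - u)) \<longlonglongrightarrow> 0 \<and>
          (\<lambda>n. l2norm m (snd (s n) - v)) \<longlonglongrightarrow> 0)}"

definition graph_adjoint :: "('v \<Rightarrow> real) \<Rightarrow> (('v \<Rightarrow> complex) \<times> ('v \<Rightarrow> complex)) set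
    \<Rightarrow> (('v \<Rightarrow> complex) \<times> ('v \<Rightarrow> complex)) set" where
  "graph_adjoint m G = {(v, w). v \<in> l2 m \<and> w \<in> l2 m \<and>
     (\<forall>(u, z)\<in>G. inner_l2 m z v = inner_l2 m u w)}"

definition is_operator_graph :: "('a \<times> 'b) set \<Rightarrow> bool" where
  "is_operator_graph G \<longleftrightarrow> (\<forall>u v w. (u, v) \<in> G \<longrightarrow> (u, w) \<in> G \<longrightarrow> v = w)"

definition essentially_selfadjoint :: "('v \<Rightarrow> real) \<Rightarrow> (('v \<Rightarrow> complex) \<times> ('v \<Rightarrow> complex)) set \<Rightarrow> bool" where
  "essentially_selfadjoint m G \<longleftrightarrow>
     is_operator_graph (graph_closure m G) \<and>
     graph_closure m G = graph_adjoint m (graph_closure m G)"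

end

theory Submission
  imports Defs
begin

(* Every \<phi> \<in> C_c(V) is Lipschitz for the intrinsic metric d with
   constant sqrt (2 Q(\<phi>)).  If \<phi>_n \<in> C_c is Q-Cauchy and converges to u in \<ell>^2, then u - \<phi>_k
   is Lipschitz with a small constant for large k; since \<phi>_k vanishes far out along any
   boundary sequence, u tends to 0 along it.  So u_\<infinity> = 0 on D(Q^(D)), and f \<notin> D(Q^(D)).

   The map u \<mapsto> energy_vec u embeds D(Q^(N))
   into \<ell>^2(V \<times> V) with squared norm E(u) = 2 Q(u) + 2 \<parallel>u\<parallel>^2.  Projecting f onto the E-closure
   of C_c(V) (via a minimizing sequence, the parallelogram law and Fatou's lemma) gives a
   residual g \<noteq> 0 that is E-orthogonal to C_c(V).  A discrete Green formula, valid under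
   (FC), turns this into <Ltilde \<phi>, g> = <\<phi>, -g> for \<phi> \<in> C_c, so (g, -g) lies in the
   adjoint of the closure of Ltilde|C_c.  Essential selfadjointness would put (g, -g) into
   the closure itself, whose accretivity (Re <Ltilde \<phi>, \<phi>> \<ge> 0) then forces g = 0. *)

lemma infsum_complex_of_real:
  "(\<Sum>\<^sub>\<infinity>x\<in>A. complex_of_real (f x)) = complex_of_real (infsum f A)"
proof (cases "f summable_on A")
  case True
  then show ?thesis by (intro infsumI has_sum_of_real) simp
next
  case False
  have "\<not> (\<lambda>x. complex_of_real (f x)) summable_on A"
  proof
    assume "(\<lambda>x. complex_of_real (f x)) summable_on A"
    from summable_on_Re[OF this] False show False by simp
  qed
  with False show ?thesis by (simp add: infsum_not_exists)
qed

lemma term_le_infsum: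
  fixes f :: "'a \<Rightarrow> real"
  assumes "f summable_on UNIV" "\<And>x. f x \<ge> 0"
  shows "f a \<le> infsum f UNIV"
  using finite_sum_le_infsum[OF assms(1), of "{a}"] assms(2) by simp

text \<open>Fatou's lemma for nonnegative unordered sums; it controls the energy of pointwise limits.\<close>
lemma fatou_infsum:
  fixes h :: "nat \<Rightarrow> 'a \<Rightarrow> real"
  assumes nn: "\<And>k x. h k x \<ge> 0"
    and lim: "\<And>x. (\<lambda>k. h k x) \<longlonglongrightarrow> H x"
    and bd: "\<And>k. h k summable_on UNIV \<and> infsum (h k) UNIV \<le> C k"
    and C: "C \<longlonglongrightarrow> C0"
  shows "H summable_on UNIV \<and> infsum H UNIV \<le> C0"
proof -
  have Hnn: "H x \<ge> 0" for x
    by (rule LIMSEQ_le_const[OF lim]) (use nn in auto)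
  have fin: "sum H F \<le> C0" if "finite F" for F
  proof (rule LIMSEQ_le)
    show "(\<lambda>k. sum (h k) F) \<longlonglongrightarrow> sum H F" by (rule tendsto_sum) (use lim in auto)
    show "C \<longlonglongrightarrow> C0" by (rule C)
    show "\<exists>N. \<forall>k\<ge>N. sum (h k) F \<le> C k"
    proof (intro exI allI impI)
      fix k :: nat
      have "sum (h k) F \<le> infsum (h k) UNIV"
        using finite_sum_le_infsum[OF _ that, of "h k"] bd[of k] nn by auto
      with bd[of k] show "sum (h k) F \<le> C k" by linarith
    qed
  qed
  have s: "H summable_on UNIV"
    by (rule nonneg_bdd_above_summable_on) (use Hnn fin in \<open>auto intro!: bdd_aboveI2\<close>)
  moreover have "infsum H UNIV \<le> C0"
    by (rule infsum_le_finite_sums[OF s]) (use fin in auto)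
  ultimately show ?thesis by simp
qed

lemma has_sum_diff:
  fixes f g :: "'a \<Rightarrow> 'b::topological_ab_group_add"
  assumes "(f has_sum a) A" "(g has_sum b) A"
  shows "((\<lambda>x. f x - g x) has_sum (a - b)) A"
proof -
  have "((\<lambda>x. - g x) has_sum - b) A" by (simp add: has_sum_uminus assms(2))
  from has_sum_add[OF assms(1) this] show ?thesis by simp
qed

lemma has_sum_finite_sum:
  fixes f :: "'s \<Rightarrow> 'a \<Rightarrow> 'b::topological_comm_monoid_add"
  assumes "finite S" "\<And>x. x \<in> S \<Longrightarrow> (f x has_sum s x) A"
  shows "((\<lambda>i. \<Sum>x\<in>S. f x i) has_sum (\<Sum>x\<in>S. s x)) A"
  using assms
proof (induction S rule: finite_induct)
  case empty thus ?case by simp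
next
  case (insert y S)
  have "((\<lambda>i. f y i + (\<Sum>x\<in>S. f x i)) has_sum (s y + (\<Sum>x\<in>S. s x))) A"
    using insert by (intro has_sum_add) auto
  thus ?case using insert by simp
qed

lemma has_sum_point: "((\<lambda>w. if w = x then k else 0) has_sum k) UNIV"
  by (rule has_sum_finite_neutralI[of "{x}"]) auto

lemma has_sum_row:
  assumes "(g has_sum s) UNIV"
  shows "((\<lambda>(a,y). if a = x then g y else 0) has_sum s) UNIV"
proof -
  let ?T = "(\<lambda>(a,y). if a = x then g y else 0)"
  have "((?T \<circ> Pair x) has_sum s) UNIV" using assms by (simp add: o_def)
  hence "(?T has_sum s) (range (Pair x))" by (subst has_sum_reindex) (auto simp: inj_on_def)
  thus ?thesis by (subst (asm) has_sum_cong_neutral[where T=UNIV]) auto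
qed

lemma has_sum_column:
  assumes "(g has_sum s) UNIV"
  shows "((\<lambda>(a,y). if y = x then g a else 0) has_sum s) UNIV"
proof -
  let ?T = "(\<lambda>(a,y). if y = x then g a else 0)"
  have "((?T \<circ> (\<lambda>a. (a,x))) has_sum s) UNIV" using assms by (simp add: o_def)
  hence "(?T has_sum s) (range (\<lambda>a. (a,x)))" by (subst has_sum_reindex) (auto simp: inj_on_def)
  thus ?thesis by (subst (asm) has_sum_cong_neutral[where T=UNIV]) auto
qed

lemma has_sum_diag:
  "((\<lambda>(x,y). if x = y then W x else 0) has_sum s) UNIV \<longleftrightarrow> (W has_sum s) UNIV"
proof -
  let ?g = "(\<lambda>(x,y). if x = y then W x else 0)"
  have "(?g has_sum s) UNIV \<longleftrightarrow> (?g has_sum s) (range (\<lambda>x. (x,x)))"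
    by (rule has_sum_cong_neutral) auto
  also have "\<dots> \<longleftrightarrow> ((?g \<circ> (\<lambda>x. (x,x))) has_sum s) UNIV"
    by (rule has_sum_reindex) (auto simp: inj_on_def)
  also have "?g \<circ> (\<lambda>x. (x,x)) = W" by auto
  finally show ?thesis .
qed

lemma summable_diag:
  "(\<lambda>(x,y). if x = y then W x else 0) summable_on UNIV \<longleftrightarrow> W summable_on UNIV"
  unfolding summable_on_def has_sum_diag ..

lemma infsum_diag:
  fixes W :: "'a \<Rightarrow> 'b::{topological_comm_monoid_add,t2_space}"
  shows "infsum (\<lambda>(x,y). if x = y then W x else 0) UNIV = infsum W UNIV"
proof (cases "W summable_on UNIV")
  case True
  then show ?thesis using has_sum_diag[of W "infsum W UNIV"] by (simp add: infsumI)
next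
  case False
  then show ?thesis using summable_diag[of W] by (simp add: infsum_not_exists)
qed

lemma cmod_diff_sq_le: "(cmod (a - c))\<^sup>2 \<le> 2 * (cmod a)\<^sup>2 + 2 * (cmod c)\<^sup>2"
proof -
  have "(cmod (a - c))\<^sup>2 \<le> (cmod a + cmod c)\<^sup>2" by (simp add: power_mono norm_triangle_ineq4)
  also have "\<dots> \<le> 2 * (cmod a)\<^sup>2 + 2 * (cmod c)\<^sup>2"
    using zero_le_power2[of "cmod a - cmod c"] by (simp add: power2_eq_square algebra_simps)
  finally show ?thesis .
qed

lemma complex_of_real_mult_cmod_sq: "complex_of_real (r * (cmod z)\<^sup>2) = complex_of_real r * z * cnj z"
  by (simp only: of_real_mult complex_norm_square mult.assoc)

text \<open>A minimal Hilbert space toolkit for \<open>\<ell>\<^sup>2(I)\<close>: the energy embedding lands in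
  \<open>\<ell>\<^sup>2(V \<times> V)\<close>, and \<open>\<ell>\<^sup>2(V,m)\<close> is identified with \<open>\<ell>\<^sup>2(V)\<close> by \<open>u \<mapsto> \<surd>m u\<close>.\<close>

definition L2 :: "('i \<Rightarrow> complex) set" where
  "L2 = {w. (\<lambda>i. (cmod (w i))\<^sup>2) summable_on UNIV}"

definition sqnorm :: "('i \<Rightarrow> complex) \<Rightarrow> real" where
  "sqnorm w = (\<Sum>\<^sub>\<infinity>i. (cmod (w i))\<^sup>2)"

definition sqinner :: "('i \<Rightarrow> complex) \<Rightarrow> ('i \<Rightarrow> complex) \<Rightarrow> complex" where
  "sqinner w h = (\<Sum>\<^sub>\<infinity>i. w i * cnj (h i))"

lemma L2_add: "w \<in> L2 \<Longrightarrow> h \<in> L2 \<Longrightarrow> (\<lambda>i. w i + h i) \<in> L2"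
  unfolding L2_def mem_Collect_eq
  by (rule summable_on_comparison_test[where f="\<lambda>i. 2 * (cmod (w i))\<^sup>2 + 2 * (cmod (h i))\<^sup>2"])
     (auto intro!: summable_on_add summable_on_cmult_right cmod_diff_sq_le[of _ "- _", simplified])

lemma L2_cmult: "w \<in> L2 \<Longrightarrow> (\<lambda>i. a * w i) \<in> L2"
  unfolding L2_def mem_Collect_eq
  by (simp add: norm_mult power_mult_distrib summable_on_cmult_right)

lemma L2_uminus: "w \<in> L2 \<Longrightarrow> (\<lambda>i. - w i) \<in> L2"
  unfolding L2_def by simp

lemma L2_diff: "w \<in> L2 \<Longrightarrow> h \<in> L2 \<Longrightarrow> (\<lambda>i. w i - h i) \<in> L2"
  using L2_add[OF _ L2_uminus[of h], of w] by simp

lemma sqnorm_nonneg: "sqnorm w \<ge> 0"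
  unfolding sqnorm_def by (rule infsum_nonneg) simp

lemma sqnorm_term_le: "w \<in> L2 \<Longrightarrow> (cmod (w i))\<^sup>2 \<le> sqnorm w"
  unfolding sqnorm_def L2_def by (rule term_le_infsum) auto

lemma sqnorm_eq_0D: "w \<in> L2 \<Longrightarrow> sqnorm w = 0 \<Longrightarrow> w i = 0"
  using sqnorm_term_le[of w i] by simp

lemma sqnorm_uminus: "sqnorm (\<lambda>i. - w i) = sqnorm w"
  unfolding sqnorm_def by simp

lemma sqnorm_cmult: "w \<in> L2 \<Longrightarrow> sqnorm (\<lambda>i. a * w i) = (cmod a)\<^sup>2 * sqnorm w"
  unfolding sqnorm_def L2_def by (simp add: norm_mult power_mult_distrib infsum_cmult_right)

lemma sqinner_summable:
  assumes "w \<in> L2" "h \<in> L2"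
  shows "(\<lambda>i. w i * cnj (h i)) summable_on UNIV"
proof -
  have s: "(\<lambda>i. (cmod (w i))\<^sup>2 + (cmod (h i))\<^sup>2) summable_on UNIV"
    using assms unfolding L2_def by (intro summable_on_add) auto
  have "(\<lambda>i. norm (w i * cnj (h i))) summable_on UNIV"
  proof (rule summable_on_comparison_test[OF s])
    fix i
    have "cmod (w i) * cmod (h i) \<le> ((cmod (w i))\<^sup>2 + (cmod (h i))\<^sup>2) / 2"
      using sum_squares_bound[of "cmod (w i)" "cmod (h i)"] by (simp add: power2_eq_square)
    also have "\<dots> \<le> (cmod (w i))\<^sup>2 + (cmod (h i))\<^sup>2" by simp
    finally show "norm (w i * cnj (h i)) \<le> (cmod (w i))\<^sup>2 + (cmod (h i))\<^sup>2"
      by (simp add: norm_mult)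
  qed simp
  thus ?thesis using summable_on_iff_abs_summable_on_complex by blast
qed

lemma sqinner_self: "sqinner w w = complex_of_real (sqnorm w)"
  unfolding sqinner_def sqnorm_def infsum_complex_of_real[symmetric]
  by (rule infsum_cong) (rule complex_norm_square[symmetric])

lemma sqinner_cnj: "sqinner h w = cnj (sqinner w h)"
  unfolding sqinner_def infsum_cnj[symmetric] by (simp add: mult.commute)

lemma sqinner_cmult_left:
  assumes "w \<in> L2" "h \<in> L2"
  shows "sqinner (\<lambda>i. a * w i) h = a * sqinner w h"
  unfolding sqinner_def using sqinner_summable[OF assms]
  by (simp add: infsum_cmult_right[symmetric] algebra_simps)

lemma sqinner_cmult_right:
  assumes "w \<in> L2" "h \<in> L2"
  shows "sqinner w (\<lambda>i. a * h i) = cnj a * sqinner w h"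
  unfolding sqinner_def using sqinner_summable[OF assms]
  by (simp add: infsum_cmult_right[symmetric] algebra_simps)

lemma sqinner_add_left:
  assumes "w \<in> L2" "w' \<in> L2" "h \<in> L2"
  shows "sqinner (\<lambda>i. w i + w' i) h = sqinner w h + sqinner w' h"
  unfolding sqinner_def using sqinner_summable[OF assms(1,3)] sqinner_summable[OF assms(2,3)]
  by (simp add: infsum_add[symmetric] algebra_simps)

lemma sqinner_add_right:
  assumes "w \<in> L2" "h \<in> L2" "h' \<in> L2"
  shows "sqinner w (\<lambda>i. h i + h' i) = sqinner w h + sqinner w h'"
  unfolding sqinner_def using sqinner_summable[OF assms(1,2)] sqinner_summable[OF assms(1,3)]
  by (simp add: infsum_add[symmetric] algebra_simps)

lemma sqinner_sum_left:
  assumes "finite S" "\<And>x. x \<in> S \<Longrightarrow> h x \<in> L2" "w \<in> L2"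
  shows "sqinner (\<lambda>i. \<Sum>x\<in>S. a x * h x i) w = (\<Sum>x\<in>S. a x * sqinner (h x) w)"
proof -
  have "((\<lambda>i. \<Sum>x\<in>S. a x * (h x i * cnj (w i))) has_sum (\<Sum>x\<in>S. a x * sqinner (h x) w)) UNIV"
    by (rule has_sum_finite_sum[OF assms(1)])
       (use assms in \<open>auto simp: sqinner_def intro!: has_sum_cmult_right has_sum_infsum sqinner_summable\<close>)
  moreover have "(\<lambda>i. (\<Sum>x\<in>S. a x * h x i) * cnj (w i)) = (\<lambda>i. \<Sum>x\<in>S. a x * (h x i * cnj (w i)))"
    by (simp add: sum_distrib_right mult.assoc)
  ultimately show ?thesis unfolding sqinner_def by (simp add: infsumI)
qed

lemma cmod_add_sq: "(cmod (a + c))\<^sup>2 = (cmod a)\<^sup>2 + (cmod c)\<^sup>2 + 2 * Re (a * cnj c)"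
  by (simp only: cmod_power2) (simp add: power2_eq_square algebra_simps)

lemma sqnorm_add:
  assumes "w \<in> L2" "h \<in> L2"
  shows "sqnorm (\<lambda>i. w i + h i) = sqnorm w + sqnorm h + 2 * Re (sqinner w h)"
proof -
  have sw: "(\<lambda>i. (cmod (w i))\<^sup>2) summable_on UNIV" and sh: "(\<lambda>i. (cmod (h i))\<^sup>2) summable_on UNIV"
    using assms unfolding L2_def by auto
  have sr: "(\<lambda>i. 2 * Re (w i * cnj (h i))) summable_on UNIV"
    by (intro summable_on_cmult_right summable_on_Re sqinner_summable assms)
  have "sqnorm (\<lambda>i. w i + h i) = (\<Sum>\<^sub>\<infinity>i. ((cmod (w i))\<^sup>2 + (cmod (h i))\<^sup>2) + 2 * Re (w i * cnj (h i)))"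
    unfolding sqnorm_def cmod_add_sq by simp
  also have "\<dots> = (\<Sum>\<^sub>\<infinity>i. (cmod (w i))\<^sup>2 + (cmod (h i))\<^sup>2) + (\<Sum>\<^sub>\<infinity>i. 2 * Re (w i * cnj (h i)))"
    by (rule infsum_add[OF summable_on_add[OF sw sh] sr])
  also have "\<dots> = sqnorm w + sqnorm h + (\<Sum>\<^sub>\<infinity>i. 2 * Re (w i * cnj (h i)))"
    by (simp only: infsum_add[OF sw sh] sqnorm_def)
  also have "(\<Sum>\<^sub>\<infinity>i. 2 * Re (w i * cnj (h i))) = 2 * (\<Sum>\<^sub>\<infinity>i. Re (w i * cnj (h i)))"
    by (rule infsum_cmult_right) (intro summable_on_Re sqinner_summable assms)
  also have "(\<Sum>\<^sub>\<infinity>i. Re (w i * cnj (h i))) = Re (sqinner w h)"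
    unfolding sqinner_def by (rule infsum_Re[OF sqinner_summable[OF assms]])
  finally show ?thesis .
qed

lemma parallelogram:
  assumes "w \<in> L2" "h \<in> L2"
  shows "sqnorm (\<lambda>i. w i + h i) + sqnorm (\<lambda>i. w i - h i) = 2 * sqnorm w + 2 * sqnorm h"
proof -
  have "sqnorm (\<lambda>i. w i - h i) = sqnorm (\<lambda>i. w i + (- h i))" by simp
  also have "\<dots> = sqnorm w + sqnorm (\<lambda>i. - h i) + 2 * Re (sqinner w (\<lambda>i. - h i))"
    by (rule sqnorm_add[OF assms(1) L2_uminus[OF assms(2)]])
  also have "sqinner w (\<lambda>i. - h i) = - sqinner w h"
    using sqinner_cmult_right[OF assms, of "-1"] by simp
  finally show ?thesis using sqnorm_add[OF assms] sqnorm_uminus[of h] by simp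
qed

lemma sqnorm_add_le:
  assumes "w \<in> L2" "h \<in> L2"
  shows "sqnorm (\<lambda>i. w i + h i) \<le> 2 * sqnorm w + 2 * sqnorm h"
  using parallelogram[OF assms] sqnorm_nonneg[of "\<lambda>i. w i - h i"] by linarith

lemma sum_cmod_mult_le:
  assumes w: "w \<in> L2" and h: "h \<in> L2" and t: "t > 0"
  shows "(\<Sum>\<^sub>\<infinity>i. cmod (w i) * cmod (h i)) \<le> (t * sqnorm w + sqnorm h / t) / 2"
proof -
  have sw: "(\<lambda>i. (cmod (w i))\<^sup>2) summable_on UNIV" and sh: "(\<lambda>i. (cmod (h i))\<^sup>2) summable_on UNIV"
    using w h unfolding L2_def by auto
  have "(\<Sum>\<^sub>\<infinity>i. cmod (w i) * cmod (h i)) \<le> (\<Sum>\<^sub>\<infinity>i. (t/2) * (cmod (w i))\<^sup>2 + (1/(2*t)) * (cmod (h i))\<^sup>2)"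
  proof (rule infsum_mono)
    show "(\<lambda>i. cmod (w i) * cmod (h i)) summable_on UNIV"
      using summable_on_iff_abs_summable_on_complex[THEN iffD1, OF sqinner_summable[OF w h]]
      by (simp add: norm_mult)
    show "(\<lambda>i. (t/2) * (cmod (w i))\<^sup>2 + (1/(2*t)) * (cmod (h i))\<^sup>2) summable_on UNIV"
      by (intro summable_on_add summable_on_cmult_right sw sh)
    fix i
    have "0 \<le> (t * cmod (w i) - cmod (h i))\<^sup>2 / t" using t by simp
    also have "(t * cmod (w i) - cmod (h i))\<^sup>2 / t = t * (cmod (w i))\<^sup>2 - 2 * cmod (w i) * cmod (h i) + (cmod (h i))\<^sup>2 / t"
      using t by (simp add: power2_eq_square field_simps)
    finally show "cmod (w i) * cmod (h i) \<le> (t/2) * (cmod (w i))\<^sup>2 + (1/(2*t)) * (cmod (h i))\<^sup>2"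
      by (simp add: field_simps)
  qed
  also have "\<dots> = (t/2) * sqnorm w + (1/(2*t)) * sqnorm h"
    unfolding sqnorm_def
    by (simp only: infsum_add[OF summable_on_cmult_right[OF sw] summable_on_cmult_right[OF sh]]
        infsum_cmult_right[OF sw] infsum_cmult_right[OF sh])
  also have "\<dots> = (t * sqnorm w + sqnorm h / t) / 2" by (simp add: field_simps)
  finally show ?thesis .
qed

text \<open>Cauchy--Schwarz: choose \<open>t = \<parallel>h\<parallel>/\<parallel>w\<parallel>\<close> in Young's inequality.\<close>
lemma cauchy_schwarz_sqinner:
  assumes w: "w \<in> L2" and h: "h \<in> L2"
  shows "cmod (sqinner w h) \<le> sqrt (sqnorm w) * sqrt (sqnorm h)"
proof (cases "sqnorm w = 0 \<or> sqnorm h = 0")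
  case True
  hence "sqinner w h = 0" unfolding sqinner_def using sqnorm_eq_0D[OF w] sqnorm_eq_0D[OF h] by auto
  thus ?thesis by (simp add: sqnorm_nonneg)
next
  case False
  define a where "a = sqrt (sqnorm w)"
  define c where "c = sqrt (sqnorm h)"
  have a: "a > 0" and c: "c > 0" using False sqnorm_nonneg[of w] sqnorm_nonneg[of h]
    unfolding a_def c_def by auto
  have na: "sqnorm w = a\<^sup>2" and nc: "sqnorm h = c\<^sup>2" using sqnorm_nonneg[of w] sqnorm_nonneg[of h]
    unfolding a_def c_def by auto
  have sabs: "(\<lambda>i. norm (w i * cnj (h i))) summable_on UNIV"
    using summable_on_iff_abs_summable_on_complex[THEN iffD1, OF sqinner_summable[OF w h]] .
  have "cmod (sqinner w h) \<le> (\<Sum>\<^sub>\<infinity>i. cmod (w i) * cmod (h i))"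
    unfolding sqinner_def using norm_infsum_bound[OF sabs] by (simp add: norm_mult)
  also have "\<dots> \<le> ((c / a) * sqnorm w + sqnorm h / (c / a)) / 2"
    using a c by (intro sum_cmod_mult_le w h) simp
  also have "\<dots> = a * c" unfolding na nc using a c by (simp add: power2_eq_square field_simps)
  finally show ?thesis unfolding a_def c_def .
qed

lemma sqnorm_triangle:
  assumes "w \<in> L2" "h \<in> L2"
  shows "sqrt (sqnorm (\<lambda>i. w i + h i)) \<le> sqrt (sqnorm w) + sqrt (sqnorm h)"
proof -
  have "sqnorm (\<lambda>i. w i + h i) = sqnorm w + sqnorm h + 2 * Re (sqinner w h)" by (rule sqnorm_add[OF assms])
  also have "Re (sqinner w h) \<le> sqrt (sqnorm w) * sqrt (sqnorm h)"
    using cauchy_schwarz_sqinner[OF assms] complex_Re_le_cmod[of "sqinner w h"] by linarith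
  hence "sqnorm w + sqnorm h + 2 * Re (sqinner w h) \<le> (sqrt (sqnorm w) + sqrt (sqnorm h))\<^sup>2"
    using sqnorm_nonneg[of w] sqnorm_nonneg[of h] by (simp add: power2_sum)
  finally have "sqnorm (\<lambda>i. w i + h i) \<le> (sqrt (sqnorm w) + sqrt (sqnorm h))\<^sup>2" by simp
  hence "sqrt (sqnorm (\<lambda>i. w i + h i)) \<le> sqrt ((sqrt (sqnorm w) + sqrt (sqnorm h))\<^sup>2)" by (rule real_sqrt_le_mono)
  thus ?thesis using sqnorm_nonneg[of w] sqnorm_nonneg[of h] by simp
qed

lemma sqinner_tendsto:
  assumes aL: "\<And>n. a n \<in> L2" and a0: "a0 \<in> L2" and hL: "\<And>n. h n \<in> L2" and h0: "h0 \<in> L2"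
    and ca: "(\<lambda>n. sqrt (sqnorm (\<lambda>i. a n i - a0 i))) \<longlonglongrightarrow> 0"
    and ch: "(\<lambda>n. sqrt (sqnorm (\<lambda>i. h n i - h0 i))) \<longlonglongrightarrow> 0"
  shows "(\<lambda>n. sqinner (a n) (h n)) \<longlonglongrightarrow> sqinner a0 h0"
proof -
  define e where "e n = sqrt (sqnorm (\<lambda>i. a n i - a0 i))" for n
  define d where "d n = sqrt (sqnorm (\<lambda>i. h n i - h0 i))" for n
  have bound: "norm (sqinner (a n) (h n) - sqinner a0 h0) \<le> e n * (d n + sqrt (sqnorm h0)) + sqrt (sqnorm a0) * d n" for n
  proof -
    have da: "(\<lambda>i. a n i - a0 i) \<in> L2" by (rule L2_diff[OF aL a0])
    have dh: "(\<lambda>i. h n i - h0 i) \<in> L2" by (rule L2_diff[OF hL h0])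
    have e1: "sqinner (a n) (h n) = sqinner (\<lambda>i. a n i - a0 i) (h n) + sqinner a0 (h n)"
      using sqinner_add_left[OF da a0 hL, of n] by simp
    have e2: "sqinner a0 (h n) = sqinner a0 (\<lambda>i. h n i - h0 i) + sqinner a0 h0"
      using sqinner_add_right[OF a0 dh h0] by simp
    have "norm (sqinner (a n) (h n) - sqinner a0 h0) = norm (sqinner (\<lambda>i. a n i - a0 i) (h n) + sqinner a0 (\<lambda>i. h n i - h0 i))"
      unfolding e1 e2 by simp
    also have "\<dots> \<le> norm (sqinner (\<lambda>i. a n i - a0 i) (h n)) + norm (sqinner a0 (\<lambda>i. h n i - h0 i))"
      by (rule norm_triangle_ineq)
    also have "\<dots> \<le> e n * sqrt (sqnorm (h n)) + sqrt (sqnorm a0) * d n"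
      unfolding e_def d_def by (intro add_mono cauchy_schwarz_sqinner da dh a0 hL)
    also have "sqrt (sqnorm (h n)) \<le> d n + sqrt (sqnorm h0)"
      using sqnorm_triangle[OF dh h0] unfolding d_def by simp
    hence "e n * sqrt (sqnorm (h n)) \<le> e n * (d n + sqrt (sqnorm h0))"
      unfolding e_def by (intro mult_left_mono) (auto simp: sqnorm_nonneg)
    finally show ?thesis by simp
  qed
  have "(\<lambda>n. e n * (d n + sqrt (sqnorm h0)) + sqrt (sqnorm a0) * d n) \<longlonglongrightarrow> 0 * (0 + sqrt (sqnorm h0)) + sqrt (sqnorm a0) * 0"
    using ca ch unfolding e_def[symmetric] d_def[symmetric] by (intro tendsto_intros)
  hence lim0: "(\<lambda>n. e n * (d n + sqrt (sqnorm h0)) + sqrt (sqnorm a0) * d n) \<longlonglongrightarrow> 0" by simp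
  have ev: "\<forall>\<^sub>F n in sequentially. norm (sqinner (a n) (h n) - sqinner a0 h0) \<le> e n * (d n + sqrt (sqnorm h0)) + sqrt (sqnorm a0) * d n"
    using bound by (intro always_eventually) blast
  have "(\<lambda>n. sqinner (a n) (h n) - sqinner a0 h0) \<longlonglongrightarrow> 0"
    by (rule Lim_null_comparison[OF ev lim0])
  from tendsto_add[OF this tendsto_const[of "sqinner a0 h0"]] show ?thesis by simp
qed

lemma sqinner_eq_0_if_minimal:
  assumes w: "w \<in> L2" and h: "h \<in> L2"
    and min: "\<And>t. sqnorm w \<le> sqnorm (\<lambda>i. w i + t * h i)"
  shows "sqinner w h = 0"
proof (rule ccontr)
  define B where "B = sqinner w h"
  define s where "s = 1 / (sqnorm h + 1)"
  assume "sqinner w h \<noteq> 0"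
  hence Bp: "(cmod B)\<^sup>2 > 0" unfolding B_def by simp
  have s: "s > 0" "s * sqnorm h < 1" using sqnorm_nonneg[of h] unfolding s_def by (auto simp: field_simps)
  define t where "t = - complex_of_real s * B"
  have "sqnorm (\<lambda>i. w i + t * h i) = sqnorm w + (cmod t)\<^sup>2 * sqnorm h + 2 * Re (cnj t * B)"
    unfolding sqnorm_add[OF w L2_cmult[OF h]] sqnorm_cmult[OF h] sqinner_cmult_right[OF w h] B_def ..
  also have "cnj t * B = - complex_of_real (s * (cmod B)\<^sup>2)"
    unfolding t_def of_real_mult complex_norm_square by (simp add: mult_ac)
  also have "(cmod t)\<^sup>2 = s\<^sup>2 * (cmod B)\<^sup>2"
    unfolding t_def using s by (simp add: norm_mult power_mult_distrib)
  finally have "0 \<le> s\<^sup>2 * (cmod B)\<^sup>2 * sqnorm h - 2 * s * (cmod B)\<^sup>2"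
    using min[of t] by simp
  hence "2 * s * (cmod B)\<^sup>2 \<le> (s * sqnorm h) * (s * (cmod B)\<^sup>2)"
    by (simp add: power2_eq_square algebra_simps)
  also have "\<dots> < 1 * (s * (cmod B)\<^sup>2)"
    using s Bp by (intro mult_strict_right_mono) auto
  finally show False using s Bp by simp
qed

section \<open>The intrinsic metric\<close>

lemma path_length_Cons2:
  "path_length b (a # c # rest) = 1 / sqrt (b a c) + path_length b (c # rest)"
  unfolding path_length_def by (simp del: sum.lessThan_Suc add: sum.lessThan_Suc_shift)

lemma path_Lipschitz:
  fixes u :: "'v \<Rightarrow> complex"
  assumes E: "\<And>x y. b x y > 0 \<Longrightarrow> cmod (u x - u y) \<le> K / sqrt (b x y)"
  shows "xs \<noteq> [] \<Longrightarrow> (\<forall>i<length xs - 1. b (xs!i) (xs!(i+1)) > 0) \<Longrightarrow>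
     cmod (u (hd xs) - u (last xs)) \<le> K * path_length b xs"
proof (induction xs)
  case Nil thus ?case by simp
next
  case (Cons a xs)
  show ?case
  proof (cases xs)
    case Nil thus ?thesis by (simp add: path_length_def)
  next
    case (Cons c rest)
    have e: "b a c > 0" using Cons.prems(2) \<open>xs = c # rest\<close> by (auto elim: allE[of _ 0])
    have p: "\<forall>i<length xs - 1. b (xs!i) (xs!(i+1)) > 0"
    proof (intro allI impI)
      fix i assume "i < length xs - 1"
      with Cons.prems(2)[rule_format, of "Suc i"] show "b (xs!i) (xs!(i+1)) > 0"
        using \<open>xs = c # rest\<close> by simp
    qed
    have ih: "cmod (u (hd xs) - u (last xs)) \<le> K * path_length b xs"
      using Cons.IH p \<open>xs = c # rest\<close> by simp
    have "cmod (u a - u (last xs)) \<le> cmod (u a - u c) + cmod (u c - u (last xs))"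
      using norm_triangle_ineq[of "u a - u c" "u c - u (last xs)"] by simp
    also have "\<dots> \<le> K / sqrt (b a c) + K * path_length b xs"
      using E[OF e] ih \<open>xs = c # rest\<close> by simp
    also have "\<dots> = K * path_length b (a # xs)"
      using \<open>xs = c # rest\<close> by (simp add: path_length_Cons2 algebra_simps)
    finally show ?thesis using \<open>xs = c # rest\<close> by simp
  qed
qed

lemma path_length_nonneg:
  assumes "is_path b xs x y" shows "path_length b xs \<ge> 0"
  using assms unfolding path_length_def is_path_def
  by (intro sum_nonneg) (auto intro: less_imp_le)

lemma dist_b_nonneg:
  assumes "connected_graph b" shows "dist_b b x y \<ge> 0"
proof -
  obtain xs where "is_path b xs x y" using assms unfolding connected_graph_def by blast
  thus ?thesis unfolding dist_b_def
    by (intro cInf_greatest) (auto intro: path_length_nonneg)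
qed

text \<open>Passing to the infimum over paths: such a function is \<open>K\<close>-Lipschitz for \<open>d\<close>.\<close>
lemma dist_b_Lipschitz:
  fixes u :: "'v \<Rightarrow> complex"
  assumes conn: "connected_graph b" and K: "K \<ge> 0"
    and E: "\<And>x y. b x y > 0 \<Longrightarrow> cmod (u x - u y) \<le> K / sqrt (b x y)"
  shows "cmod (u x - u y) \<le> K * dist_b b x y"
proof -
  define P where "P = {path_length b xs | xs. is_path b xs x y}"
  have pb: "cmod (u x - u y) \<le> K * p" if "p \<in> P" for p
  proof -
    from that obtain xs where xs: "is_path b xs x y" "p = path_length b xs" by (auto simp: P_def)
    show ?thesis using path_Lipschitz[where xs=xs, OF E] xs unfolding is_path_def by auto
  qed
  obtain xs0 where xs0: "is_path b xs0 x y" using conn unfolding connected_graph_def by blast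
  hence ne: "P \<noteq> {}" by (auto simp: P_def)
  show ?thesis
  proof (cases "K = 0")
    case True
    with pb[of "path_length b xs0"] xs0 show ?thesis by (auto simp: P_def)
  next
    case False
    hence Kp: "K > 0" using K by simp
    have "cmod (u x - u y) / K \<le> Inf P"
      by (rule cInf_greatest[OF ne]) (use pb Kp in \<open>auto simp: field_simps\<close>)
    thus ?thesis using Kp unfolding dist_b_def P_def[symmetric] by (simp add: field_simps)
  qed
qed

lemma edge_increment_bound:
  fixes u :: "'v \<Rightarrow> complex"
  assumes s: "(\<lambda>(x,y). b x y * (cmod (u x - u y))\<^sup>2) summable_on UNIV"
    and nn: "\<And>x y. b x y \<ge> 0" and bp: "b x y > 0"
  shows "cmod (u x - u y) \<le> sqrt (infsum (\<lambda>(x,y). b x y * (cmod (u x - u y))\<^sup>2) UNIV) / sqrt (b x y)"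
proof -
  define D where "D = infsum (\<lambda>(x,y). b x y * (cmod (u x - u y))\<^sup>2) UNIV"
  have "b x y * (cmod (u x - u y))\<^sup>2 \<le> D"
    using term_le_infsum[OF s, of "(x,y)"] nn unfolding D_def by (auto intro: mult_nonneg_nonneg)
  hence "(cmod (u x - u y))\<^sup>2 \<le> D / b x y" using bp by (simp add: field_simps)
  hence "sqrt ((cmod (u x - u y))\<^sup>2) \<le> sqrt (D / b x y)" by (rule real_sqrt_le_mono)
  thus ?thesis unfolding D_def by (simp add: real_sqrt_divide)
qed

text \<open>A boundary sequence eventually leaves every finite set of vertices: if it returned
  infinitely often to a vertex \<open>a\<close>, the Cauchy property would make it converge to \<open>a\<close>.\<close>
lemma boundary_seq_leaves_finite:
  assumes conn: "connected_graph b" and bs: "boundary_seq b xs" and fin: "finite S"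
  shows "eventually (\<lambda>n. xs n \<notin> S) sequentially"
proof -
  have "eventually (\<lambda>n. xs n \<noteq> a) sequentially" for a
  proof (rule ccontr)
    assume "\<not> eventually (\<lambda>n. xs n \<noteq> a) sequentially"
    hence fr: "\<forall>N. \<exists>l\<ge>N. xs l = a"
      unfolding eventually_sequentially by auto
    have "(\<lambda>n. dist_b b (xs n) a) \<longlonglongrightarrow> 0"
    proof (rule LIMSEQ_I)
      fix r :: real assume r: "r > 0"
      obtain N where N: "\<forall>k\<ge>N. \<forall>l\<ge>N. dist_b b (xs k) (xs l) < r"
        using bs r unfolding boundary_seq_def d_Cauchy_def by blast
      obtain l where l: "l \<ge> N" "xs l = a" using fr by blast
      show "\<exists>no. \<forall>n\<ge>no. norm (dist_b b (xs n) a - 0) < r"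
        using N l dist_b_nonneg[OF conn] by (metis abs_of_nonneg real_norm_def diff_zero)
    qed
    thus False using bs unfolding boundary_seq_def by blast
  qed
  hence "eventually (\<lambda>n. \<forall>a\<in>S. xs n \<noteq> a) sequentially"
    by (intro eventually_ball_finite[OF fin]) auto
  thus ?thesis by (rule eventually_mono) auto
qed

definition delta_at :: "'v \<Rightarrow> 'v \<Rightarrow> complex" where
  "delta_at x = (\<lambda>y. if y = x then 1 else 0)"

lemma Cc_finite: "v \<in> Cc \<Longrightarrow> finite {x. v x \<noteq> 0}"
  by (simp add: Cc_def)

lemma Cc_lin: "u \<in> Cc \<Longrightarrow> v \<in> Cc \<Longrightarrow> (\<lambda>x. a * u x + a' * v x) \<in> Cc"
  unfolding Cc_def by (auto intro: finite_subset[of _ "{x. u x \<noteq> 0} \<union> {x. v x \<noteq> 0}"])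

lemma Cc_diff: "v \<in> Cc \<Longrightarrow> w \<in> Cc \<Longrightarrow> v - w \<in> Cc"
  using Cc_lin[of v w 1 "-1"] by (simp add: fun_diff_def)

lemma delta_at_Cc: "delta_at x \<in> Cc"
  unfolding Cc_def delta_at_def by (auto intro: finite_subset[of _ "{x}"])

lemma Cc_decomp:
  assumes "v \<in> Cc"
  shows "v = (\<lambda>y. \<Sum>x\<in>{x. v x \<noteq> 0}. v x * delta_at x y)"
proof
  fix y
  have "(\<Sum>x\<in>{x. v x \<noteq> 0}. v x * delta_at x y) = (\<Sum>x\<in>{x. v x \<noteq> 0}. if x = y then v y else 0)"
    by (rule sum.cong) (auto simp: delta_at_def)
  also have "\<dots> = v y" using Cc_finite[OF assms] by (simp add: sum.delta)
  finally show "v y = (\<Sum>x\<in>{x. v x \<noteq> 0}. v x * delta_at x y)" by simp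
qed

text \<open>Its squared norm is
  \<open>E(u) = 2 Q(u) + 2\<parallel>u\<parallel>\<^sup>2\<close>, summing over ordered pairs.  \<open>weighted u = \<surd>m u\<close> identifies
  \<open>\<ell>\<^sup>2(V,m)\<close> with \<open>\<ell>\<^sup>2(V)\<close>.\<close>

definition energy_vec :: "('v \<Rightarrow> real) \<Rightarrow> ('v \<Rightarrow> 'v \<Rightarrow> real) \<Rightarrow> ('v \<Rightarrow> real)
    \<Rightarrow> ('v \<Rightarrow> complex) \<Rightarrow> ('v \<times> 'v \<Rightarrow> complex)" where
  "energy_vec m b c u = (\<lambda>(x,y). if x = y then complex_of_real (sqrt (2 * c x + 2 * m x)) * u x
                          else complex_of_real (sqrt (b x y)) * (u x - u y))"

definition weighted :: "('v \<Rightarrow> real) \<Rightarrow> ('v \<Rightarrow> complex) \<Rightarrow> ('v \<Rightarrow> complex)" where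
  "weighted m u = (\<lambda>x. complex_of_real (sqrt (m x)) * u x)"

lemma energy_vec_lin:
  "energy_vec m b c (\<lambda>x. a * u x + a' * v x) = (\<lambda>i. a * energy_vec m b c u i + a' * energy_vec m b c v i)"
  unfolding energy_vec_def by (auto simp: fun_eq_iff algebra_simps)

lemma energy_vec_diff: "energy_vec m b c (\<lambda>x. u x - v x) = (\<lambda>i. energy_vec m b c u i - energy_vec m b c v i)"
  unfolding energy_vec_def by (auto simp: fun_eq_iff algebra_simps)

lemma energy_vec_sum:
  "energy_vec m b c (\<lambda>y. \<Sum>x\<in>S. a x * h x y) = (\<lambda>i. \<Sum>x\<in>S. a x * energy_vec m b c (h x) i)"
  unfolding energy_vec_def
  by (auto simp: fun_eq_iff sum_distrib_left sum_distrib_right mult_ac sum_subtractf[symmetric] right_diff_distrib)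

lemma energy_vec_tendsto:
  assumes "\<And>x. (\<lambda>k. u k x) \<longlonglongrightarrow> U x"
  shows "(\<lambda>k. energy_vec m b c (u k) i) \<longlonglongrightarrow> energy_vec m b c U i"
  by (cases i) (auto simp: energy_vec_def intro!: tendsto_intros assms)

lemma QN_form_neq_QD_form:
  assumes "f \<in> QN_dom m b c" "f \<notin> QD_dom m b c"
  shows "QN_form m b c \<noteq> QD_form m b c"
  using assms unfolding QN_form_def QD_form_def by auto

context
  fixes m :: "'v \<Rightarrow> real" and b :: "'v \<Rightarrow> 'v \<Rightarrow> real" and c :: "'v \<Rightarrow> real"
  assumes graph: "graph_over m b c"
begin

lemma m_pos: "m x > 0" and m_nonneg: "m x \<ge> 0" and c_nonneg: "c x \<ge> 0"
  and b_nonneg: "b x y \<ge> 0" and b_diag: "b x x = 0" and b_sym: "b x y = b y x"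
  using graph unfolding graph_over_def by (auto simp: less_imp_le)

lemma b_summable: "(\<lambda>y. b x y) summable_on UNIV"
  using graph unfolding graph_over_def by blast

section \<open>Part 1: functions in \<open>D(Q\<^sup>(\<^sup>D\<^sup>))\<close> vanish at the boundary\<close>

lemma pair_summable_Cc:
  assumes v: "v \<in> Cc"
  shows "(\<lambda>(x,y). b x y * (cmod (v x - v y))\<^sup>2) summable_on UNIV"
proof -
  define T1 where "T1 = (\<lambda>(x,y). b x y * (cmod (v x))\<^sup>2)"
  have fin: "finite {x. v x \<noteq> 0}" using Cc_finite[OF v] .
  have "T1 summable_on Sigma UNIV (\<lambda>_. UNIV)"
  proof (rule summable_on_SigmaI[where g = "\<lambda>x. infsum (b x) UNIV * (cmod (v x))\<^sup>2"])
    fix x :: 'v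
    have "((\<lambda>y. b x y) has_sum infsum (b x) UNIV) UNIV"
      using b_summable[of x] by (simp add: has_sum_infsum)
    from has_sum_cmult_right[OF this, of "(cmod (v x))\<^sup>2"]
    show "((\<lambda>y. T1 (x, y)) has_sum infsum (b x) UNIV * (cmod (v x))\<^sup>2) UNIV"
      by (simp add: T1_def mult.commute)
  next
    show "(\<lambda>x. infsum (b x) UNIV * (cmod (v x))\<^sup>2) summable_on UNIV"
      by (rule finite_nonzero_values_imp_summable_on) (rule finite_subset[OF _ fin], auto)
  next
    fix x y show "0 \<le> T1 (x, y)" using b_nonneg by (simp add: T1_def)
  qed
  hence s1: "T1 summable_on UNIV" by simp
  have s2: "(\<lambda>(x,y). T1 (y,x)) summable_on UNIV"
    using s1 summable_on_swap[of T1 UNIV UNIV] by simp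
  have s: "(\<lambda>p. 2 * T1 p + 2 * (\<lambda>(x,y). T1 (y,x)) p) summable_on UNIV"
    by (intro summable_on_add summable_on_cmult_right s1 s2)
  show ?thesis
  proof (rule summable_on_comparison_test[OF s])
    fix p :: "'v \<times> 'v"
    obtain x y where p: "p = (x,y)" by force
    have "b x y * (cmod (v x - v y))\<^sup>2 \<le> b x y * (2 * (cmod (v x))\<^sup>2 + 2 * (cmod (v y))\<^sup>2)"
      by (rule mult_left_mono[OF cmod_diff_sq_le b_nonneg])
    thus "(case p of (x, y) \<Rightarrow> b x y * (cmod (v x - v y))\<^sup>2) \<le> 2 * T1 p + 2 * (case p of (x, y) \<Rightarrow> T1 (y, x))"
      using b_sym[of x y] by (simp add: p T1_def algebra_simps)
    show "0 \<le> (case p of (x, y) \<Rightarrow> b x y * (cmod (v x - v y))\<^sup>2)"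
      using b_nonneg by (simp add: p)
  qed
qed

lemma Re_QN_val:
  "Re (QN_val b c v v) = (1/2) * infsum (\<lambda>(x,y). b x y * (cmod (v x - v y))\<^sup>2) UNIV
                         + infsum (\<lambda>x. c x * (cmod (v x))\<^sup>2) UNIV"
proof -
  have e1: "(\<lambda>(x, y). complex_of_real (b x y) * (v x - v y) * cnj (v x - v y)) =
        (\<lambda>p. complex_of_real ((\<lambda>(x,y). b x y * (cmod (v x - v y))\<^sup>2) p))"
    by (rule ext) (auto simp only: complex_of_real_mult_cmod_sq split: prod.splits)
  have e2: "(\<lambda>x. complex_of_real (c x) * v x * cnj (v x)) =
        (\<lambda>x. complex_of_real (c x * (cmod (v x))\<^sup>2))"
    by (rule ext) (simp only: complex_of_real_mult_cmod_sq)
  show ?thesis unfolding QN_val_def e1 e2 infsum_complex_of_real by simp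
qed

lemma Re_QN_val_ge:
  "Re (QN_val b c v v) \<ge> (1/2) * infsum (\<lambda>(x,y). b x y * (cmod (v x - v y))\<^sup>2) UNIV"
  unfolding Re_QN_val using c_nonneg by (simp add: infsum_nonneg)

lemma Re_QN_val_nonneg: "Re (QN_val b c v v) \<ge> 0"
proof -
  have "infsum (\<lambda>(x,y). b x y * (cmod (v x - v y))\<^sup>2) UNIV \<ge> 0"
    by (rule infsum_nonneg) (auto simp: b_nonneg split: prod.splits)
  with Re_QN_val_ge[of v] show ?thesis by linarith
qed

lemma Cc_dist_Lipschitz:
  assumes conn: "connected_graph b" and v: "v \<in> Cc"
  shows "cmod (v x - v y) \<le> sqrt (2 * Re (QN_val b c v v)) * dist_b b x y"
proof -
  define D where "D = infsum (\<lambda>(x,y). b x y * (cmod (v x - v y))\<^sup>2) UNIV"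
  have "cmod (v x - v y) \<le> sqrt D * dist_b b x y"
  proof (rule dist_b_Lipschitz[OF conn])
    show "0 \<le> sqrt D" unfolding D_def
      by (intro real_sqrt_ge_zero infsum_nonneg) (auto intro: mult_nonneg_nonneg b_nonneg)
  qed (auto simp: D_def intro!: edge_increment_bound pair_summable_Cc[OF v] b_nonneg)
  also have "\<dots> \<le> sqrt (2 * Re (QN_val b c v v)) * dist_b b x y"
    using Re_QN_val_ge[of v] dist_b_nonneg[OF conn] unfolding D_def
    by (intro mult_right_mono real_sqrt_le_mono) auto
  finally show ?thesis .
qed

lemma Cc_l2: "v \<in> Cc \<Longrightarrow> v \<in> l2 m"
  unfolding l2_def mem_Collect_eq
  by (intro finite_nonzero_values_imp_summable_on) (auto intro: finite_subset[OF _ Cc_finite])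

lemma l2_diff:
  assumes "u \<in> l2 m" "v \<in> l2 m"
  shows "u - v \<in> l2 m"
proof -
  have s: "(\<lambda>x. 2 * ((cmod (u x))\<^sup>2 * m x) + 2 * ((cmod (v x))\<^sup>2 * m x)) summable_on UNIV"
    using assms unfolding l2_def by (intro summable_on_add summable_on_cmult_right) auto
  show ?thesis unfolding l2_def mem_Collect_eq
  proof (rule summable_on_comparison_test[OF s])
    fix x
    have "(cmod (u x - v x))\<^sup>2 * m x \<le> (2 * (cmod (u x))\<^sup>2 + 2 * (cmod (v x))\<^sup>2) * m x"
      by (rule mult_right_mono[OF cmod_diff_sq_le m_nonneg])
    thus "(cmod ((u - v) x))\<^sup>2 * m x \<le> 2 * ((cmod (u x))\<^sup>2 * m x) + 2 * ((cmod (v x))\<^sup>2 * m x)"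
      by (simp add: algebra_simps)
    show "0 \<le> (cmod ((u - v) x))\<^sup>2 * m x" using m_nonneg by simp
  qed
qed

lemma l2_pointwise:
  assumes "w \<in> l2 m"
  shows "cmod (w x) \<le> l2norm m w / sqrt (m x)"
proof -
  define S where "S = (\<Sum>\<^sub>\<infinity>x. (cmod (w x))\<^sup>2 * m x)"
  have "(cmod (w x))\<^sup>2 * m x \<le> S"
    unfolding S_def by (rule term_le_infsum) (use assms m_nonneg in \<open>auto simp: l2_def\<close>)
  hence "(cmod (w x))\<^sup>2 \<le> S / m x" using m_pos by (simp add: field_simps)
  hence "sqrt ((cmod (w x))\<^sup>2) \<le> sqrt (S / m x)" by (rule real_sqrt_le_mono)
  thus ?thesis unfolding l2norm_def S_def[symmetric] by (simp add: real_sqrt_divide)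
qed

lemma approx_seq_pointwise:
  assumes "approx_seq m b c \<phi> u"
  shows "(\<lambda>n. \<phi> n x) \<longlonglongrightarrow> u x"
proof -
  have u: "u \<in> l2 m" and \<phi>: "\<And>n. \<phi> n \<in> Cc" and conv: "(\<lambda>n. l2norm m (\<phi> n - u)) \<longlonglongrightarrow> 0"
    using assms unfolding approx_seq_def by auto
  have "(\<lambda>n. \<phi> n x - u x) \<longlonglongrightarrow> 0"
  proof (rule Lim_null_comparison)
    show "\<forall>\<^sub>F n in sequentially. norm (\<phi> n x - u x) \<le> l2norm m (\<phi> n - u) / sqrt (m x)"
      using l2_pointwise[OF l2_diff[OF Cc_l2[OF \<phi>] u]] by simp
    show "(\<lambda>n. l2norm m (\<phi> n - u) / sqrt (m x)) \<longlonglongrightarrow> 0"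
      using tendsto_divide_zero[OF conv] by simp
  qed
  from tendsto_add[OF this tendsto_const[of "u x"]] show ?thesis by simp
qed

text \<open>If \<open>\<phi>\<close> approximates \<open>u\<close> and is \<open>\<epsilon>\<close>-Cauchy for \<open>Q\<close> beyond \<open>K\<close>, then for \<open>k \<ge> K\<close> the error
  \<open>u - \<phi>\<^sub>k\<close> is Lipschitz with constant \<open>\<surd>(2\<epsilon>)\<close>: pass to the limit \<open>l \<rightarrow> \<infinity>\<close> in the bound
  for \<open>\<phi>\<^sub>l - \<phi>\<^sub>k\<close>.\<close>
lemma approx_seq_error_Lipschitz:
  assumes conn: "connected_graph b" and ap: "approx_seq m b c \<phi> u"
    and K: "\<forall>k\<ge>K. \<forall>l\<ge>K. Re (QN_val b c (\<phi> k - \<phi> l) (\<phi> k - \<phi> l)) < \<epsilon>" and k: "k \<ge> K"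
  shows "cmod ((u x - \<phi> k x) - (u y - \<phi> k y)) \<le> sqrt (2 * \<epsilon>) * dist_b b x y"
proof (rule LIMSEQ_le_const2)
  have \<phi>: "\<And>n. \<phi> n \<in> Cc" using ap unfolding approx_seq_def by auto
  show "(\<lambda>l. cmod ((\<phi> l x - \<phi> k x) - (\<phi> l y - \<phi> k y))) \<longlonglongrightarrow> cmod ((u x - \<phi> k x) - (u y - \<phi> k y))"
    by (intro tendsto_intros approx_seq_pointwise[OF ap])
  have "cmod ((\<phi> l x - \<phi> k x) - (\<phi> l y - \<phi> k y)) \<le> sqrt (2 * \<epsilon>) * dist_b b x y" if l: "l \<ge> K" for l
  proof -
    have "cmod ((\<phi> l - \<phi> k) x - (\<phi> l - \<phi> k) y)
        \<le> sqrt (2 * Re (QN_val b c (\<phi> l - \<phi> k) (\<phi> l - \<phi> k))) * dist_b b x y"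
      by (rule Cc_dist_Lipschitz[OF conn Cc_diff[OF \<phi> \<phi>]])
    also have "\<dots> \<le> sqrt (2 * \<epsilon>) * dist_b b x y"
      using K[rule_format, of l k] k l dist_b_nonneg[OF conn]
      by (intro mult_right_mono real_sqrt_le_mono) auto
    finally show ?thesis by simp
  qed
  thus "\<exists>N. \<forall>l\<ge>N. cmod ((\<phi> l x - \<phi> k x) - (\<phi> l y - \<phi> k y)) \<le> sqrt (2 * \<epsilon>) * dist_b b x y"
    by blast
qed

lemma QD_dom_tendsto_0_at_boundary:
  assumes conn: "connected_graph b" and u: "u \<in> QD_dom m b c" and bs: "boundary_seq b xs"
  shows "(\<lambda>n. u (xs n)) \<longlonglongrightarrow> 0"
proof (rule LIMSEQ_I)
  fix \<eta> :: real assume \<eta>: "\<eta> > 0"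
  obtain \<phi> where ap: "approx_seq m b c \<phi> u" using u unfolding QD_dom_def by blast
  define \<epsilon> where "\<epsilon> = \<eta>\<^sup>2 / 8"
  have \<epsilon>: "\<epsilon> > 0" and sqrt_\<epsilon>: "sqrt (2 * \<epsilon>) = \<eta> / 2"
    using \<eta> by (auto simp: \<epsilon>_def real_sqrt_divide)
  obtain K where K: "\<forall>k\<ge>K. \<forall>l\<ge>K. Re (QN_val b c (\<phi> k - \<phi> l) (\<phi> k - \<phi> l)) < \<epsilon>"
    using ap \<epsilon> unfolding approx_seq_def by blast
  obtain N where N: "\<forall>n\<ge>N. dist_b b (xs n) (xs N) < 1"
    using bs unfolding boundary_seq_def d_Cauchy_def by (meson order_refl zero_less_one)
  define z where "z = xs N"
  have "eventually (\<lambda>k. cmod (u z - \<phi> k z) < \<eta> / 2) sequentially"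
    using tendstoD[OF approx_seq_pointwise[OF ap, of z], of "\<eta> / 2"] \<eta>
    by (simp add: dist_norm norm_minus_commute)
  then obtain k where k: "k \<ge> K" "cmod (u z - \<phi> k z) < \<eta> / 2"
    unfolding eventually_sequentially by (meson nle_le)
  have "eventually (\<lambda>n. xs n \<notin> {x. \<phi> k x \<noteq> 0}) sequentially"
    using ap boundary_seq_leaves_finite[OF conn bs] Cc_finite unfolding approx_seq_def by blast
  moreover have "eventually (\<lambda>n. n \<ge> N) sequentially" by (rule eventually_ge_at_top)
  ultimately have "eventually (\<lambda>n. norm (u (xs n) - 0) < \<eta>) sequentially"
  proof eventually_elim
    case (elim n)
    have "cmod (u (xs n)) \<le> cmod ((u (xs n) - \<phi> k (xs n)) - (u z - \<phi> k z)) + cmod (u z - \<phi> k z)"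
      using elim(1) norm_triangle_ineq[of "(u (xs n) - \<phi> k (xs n)) - (u z - \<phi> k z)" "u z - \<phi> k z"] by simp
    also have "\<dots> < \<eta> / 2 * 1 + \<eta> / 2"
    proof (rule add_le_less_mono)
      have "cmod ((u (xs n) - \<phi> k (xs n)) - (u z - \<phi> k z)) \<le> \<eta> / 2 * dist_b b (xs n) z"
        using approx_seq_error_Lipschitz[OF conn ap K k(1)] unfolding sqrt_\<epsilon> .
      also have "\<dots> \<le> \<eta> / 2 * 1" using N elim(2) \<eta> unfolding z_def by (intro mult_left_mono) auto
      finally show "cmod ((u (xs n) - \<phi> k (xs n)) - (u z - \<phi> k z)) \<le> \<eta> / 2 * 1" .
    qed (rule k(2))
    finally show ?case by simp
  qed
  thus "\<exists>no. \<forall>n\<ge>no. norm (u (xs n) - 0) < \<eta>" by (simp add: eventually_sequentially)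
qed

lemma u_infty_QD_dom:
  assumes conn: "connected_graph b" and u: "u \<in> QD_dom m b c"
  shows "u_infty b u = (\<lambda>_. 0)"
proof
  fix xs show "u_infty b u xs = 0"
    using QD_dom_tendsto_0_at_boundary[OF conn u] unfolding u_infty_def by (auto intro: limI)
qed

abbreviation energy :: "('v \<Rightarrow> complex) \<Rightarrow> real" where
  "energy u \<equiv> sqnorm (energy_vec m b c u)"

lemma energy_vec_sq:
  "(cmod (energy_vec m b c u p))\<^sup>2 = (\<lambda>(x,y). b x y * (cmod (u x - u y))\<^sup>2) p
     + (\<lambda>(x,y). if x = y then (2 * c x + 2 * m x) * (cmod (u x))\<^sup>2 else 0) p"
  using c_nonneg m_nonneg b_nonneg b_diag
  by (cases p) (auto simp: energy_vec_def norm_mult power_mult_distrib)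

lemma diag_energy_summable_iff:
  "(\<lambda>(x,y). if x = y then (2 * c x + 2 * m x) * (cmod (u x))\<^sup>2 else 0) summable_on UNIV
   \<longleftrightarrow> (\<lambda>x. c x * (cmod (u x))\<^sup>2) summable_on UNIV \<and> (\<lambda>x. (cmod (u x))\<^sup>2 * m x) summable_on UNIV"
  (is "?D \<longleftrightarrow> ?C \<and> ?M")
proof
  assume ?D
  hence d: "(\<lambda>x. (2 * c x + 2 * m x) * (cmod (u x))\<^sup>2) summable_on UNIV" by (simp only: summable_diag)
  show "?C \<and> ?M"
    by (intro conjI; rule summable_on_comparison_test[OF d])
       (use c_nonneg m_nonneg in \<open>auto simp: algebra_simps intro!: mult_nonneg_nonneg\<close>)
next
  assume "?C \<and> ?M"
  hence "(\<lambda>x. 2 * (c x * (cmod (u x))\<^sup>2) + 2 * ((cmod (u x))\<^sup>2 * m x)) summable_on UNIV"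
    by (intro summable_on_add summable_on_cmult_right) auto
  thus ?D by (simp only: summable_diag) (simp add: algebra_simps)
qed

lemma QN_dom_iff_energy_vec_L2: "u \<in> QN_dom m b c \<longleftrightarrow> energy_vec m b c u \<in> L2"
proof -
  let ?P = "\<lambda>(x,y). b x y * (cmod (u x - u y))\<^sup>2"
  let ?D = "\<lambda>(x,y). if x = y then (2 * c x + 2 * m x) * (cmod (u x))\<^sup>2 else 0"
  have nn: "?P p \<ge> 0" "?D p \<ge> 0" for p
    using b_nonneg c_nonneg m_nonneg by (auto split: prod.splits)
  have "(\<lambda>p. ?P p + ?D p) summable_on UNIV \<longleftrightarrow> ?P summable_on UNIV \<and> ?D summable_on UNIV"
  proof (intro iffI conjI)
    assume s: "(\<lambda>p. ?P p + ?D p) summable_on UNIV"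
    show "?P summable_on UNIV" by (rule summable_on_comparison_test[OF s]) (use nn in auto)
    show "?D summable_on UNIV" by (rule summable_on_comparison_test[OF s]) (use nn in auto)
  qed (auto intro: summable_on_add)
  thus ?thesis
    unfolding QN_dom_def L2_def l2_def mem_Collect_eq energy_vec_sq diag_energy_summable_iff by auto
qed

lemma Cc_energy_vec_L2:
  assumes v: "v \<in> Cc"
  shows "energy_vec m b c v \<in> L2"
proof -
  have "(\<lambda>x. c x * (cmod (v x))\<^sup>2) summable_on UNIV"
    by (rule finite_nonzero_values_imp_summable_on) (rule finite_subset[OF _ Cc_finite[OF v]], auto)
  with Cc_l2[OF v] pair_summable_Cc[OF v] have "v \<in> QN_dom m b c" unfolding QN_dom_def by blast
  thus ?thesis by (simp add: QN_dom_iff_energy_vec_L2)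
qed

lemma l2_iff_weighted_L2: "u \<in> l2 m \<longleftrightarrow> weighted m u \<in> L2"
  unfolding l2_def L2_def weighted_def using m_nonneg by (simp add: norm_mult power_mult_distrib mult.commute)

lemma l2norm_weighted: "l2norm m u = sqrt (sqnorm (weighted m u))"
  unfolding l2norm_def sqnorm_def weighted_def using m_nonneg by (simp add: norm_mult power_mult_distrib mult.commute)

lemma inner_l2_weighted: "inner_l2 m u v = sqinner (weighted m u) (weighted m v)"
  unfolding inner_l2_def sqinner_def weighted_def
proof (rule infsum_cong)
  fix x
  have "complex_of_real (m x) = complex_of_real (sqrt (m x)) * complex_of_real (sqrt (m x))"
    using m_nonneg[of x] by (simp flip: of_real_mult)
  thus "u x * cnj (v x) * complex_of_real (m x) =
    complex_of_real (sqrt (m x)) * u x * cnj (complex_of_real (sqrt (m x)) * v x)"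
    by (simp add: algebra_simps)
qed

lemma energy_identity:
  assumes u: "u \<in> QN_dom m b c"
  shows "sqnorm (energy_vec m b c u) = 2 * Re (QN_val b c u u) + 2 * sqnorm (weighted m u)"
proof -
  let ?P = "\<lambda>(x,y). b x y * (cmod (u x - u y))\<^sup>2"
  have sP: "?P summable_on UNIV" and sC: "(\<lambda>x. c x * (cmod (u x))\<^sup>2) summable_on UNIV"
    and sM: "(\<lambda>x. (cmod (u x))\<^sup>2 * m x) summable_on UNIV"
    using u unfolding QN_dom_def l2_def by auto
  have sD: "(\<lambda>(x,y). if x = y then (2 * c x + 2 * m x) * (cmod (u x))\<^sup>2 else 0) summable_on UNIV"
    using sC sM diag_energy_summable_iff by blast
  have w: "sqnorm (weighted m u) = (\<Sum>\<^sub>\<infinity>x. (cmod (u x))\<^sup>2 * m x)"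
    unfolding sqnorm_def weighted_def using m_nonneg by (simp add: norm_mult power_mult_distrib mult.commute)
  have diag: "(\<Sum>\<^sub>\<infinity>x. (2 * c x + 2 * m x) * (cmod (u x))\<^sup>2)
      = 2 * (\<Sum>\<^sub>\<infinity>x. c x * (cmod (u x))\<^sup>2) + 2 * (\<Sum>\<^sub>\<infinity>x. (cmod (u x))\<^sup>2 * m x)"
  proof -
    have "(\<Sum>\<^sub>\<infinity>x. (2 * c x + 2 * m x) * (cmod (u x))\<^sup>2)
        = (\<Sum>\<^sub>\<infinity>x. 2 * (c x * (cmod (u x))\<^sup>2) + 2 * ((cmod (u x))\<^sup>2 * m x))"
      by (rule infsum_cong) (simp add: algebra_simps)
    also have "\<dots> = (\<Sum>\<^sub>\<infinity>x. 2 * (c x * (cmod (u x))\<^sup>2)) + (\<Sum>\<^sub>\<infinity>x. 2 * ((cmod (u x))\<^sup>2 * m x))"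
      by (intro infsum_add summable_on_cmult_right sC sM)
    also have "\<dots> = 2 * (\<Sum>\<^sub>\<infinity>x. c x * (cmod (u x))\<^sup>2) + 2 * (\<Sum>\<^sub>\<infinity>x. (cmod (u x))\<^sup>2 * m x)"
      by (simp only: infsum_cmult_right[OF sC] infsum_cmult_right[OF sM])
    finally show ?thesis .
  qed
  have "sqnorm (energy_vec m b c u) = infsum ?P UNIV
      + infsum (\<lambda>(x,y). if x = y then (2 * c x + 2 * m x) * (cmod (u x))\<^sup>2 else 0) UNIV"
    unfolding sqnorm_def energy_vec_sq by (rule infsum_add[OF sP sD])
  thus ?thesis unfolding infsum_diag diag Re_QN_val w by simp
qed

lemma sqnorm_weighted_le_energy:
  assumes "energy_vec m b c u \<in> L2"
  shows "2 * sqnorm (weighted m u) \<le> sqnorm (energy_vec m b c u)"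
  using energy_identity[OF assms[folded QN_dom_iff_energy_vec_L2]] Re_QN_val_nonneg[of u] by simp

lemma Re_QN_val_le_energy:
  assumes "energy_vec m b c u \<in> L2"
  shows "Re (QN_val b c u u) \<le> sqnorm (energy_vec m b c u)"
  using energy_identity[OF assms[folded QN_dom_iff_energy_vec_L2]] Re_QN_val_nonneg[of u]
    sqnorm_nonneg[of "weighted m u"] by simp

lemma pointwise_le_energy:
  assumes "energy_vec m b c u \<in> L2"
  shows "(cmod (u x))\<^sup>2 \<le> sqnorm (energy_vec m b c u) / (2 * m x)"
proof -
  have wL: "weighted m u \<in> L2"
    using assms QN_dom_iff_energy_vec_L2 l2_iff_weighted_L2 unfolding QN_dom_def by auto
  have "m x * (cmod (u x))\<^sup>2 = (cmod (weighted m u x))\<^sup>2"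
    using m_nonneg[of x] by (simp add: weighted_def norm_mult power_mult_distrib)
  also have "\<dots> \<le> sqnorm (weighted m u)" by (rule sqnorm_term_le[OF wL])
  finally have "2 * (m x * (cmod (u x))\<^sup>2) \<le> sqnorm (energy_vec m b c u)"
    using sqnorm_weighted_le_energy[OF assms] by linarith
  thus ?thesis using m_pos[of x] by (simp add: field_simps)
qed

section \<open>A discrete Green formula\<close>

text \<open>For finite energy the row sums defining \<open>Ltilde\<close> converge absolutely, since
  \<open>b|t| \<le> b + b|t|\<^sup>2\<close> and \<open>b(x,\<cdot>)\<close> is summable.\<close>
lemma row_summable:
  assumes L: "energy_vec m b c u \<in> L2"
  shows "(\<lambda>y. complex_of_real (b x y) * (u x - u y)) summable_on UNIV"
proof -
  have P: "(\<lambda>(x,y). b x y * (cmod (u x - u y))\<^sup>2) summable_on Sigma UNIV (\<lambda>_. UNIV)"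
    using QN_dom_iff_energy_vec_L2[THEN iffD2, OF L] unfolding QN_dom_def by simp
  have s1: "(\<lambda>y. b x y * (cmod (u x - u y))\<^sup>2) summable_on UNIV"
    using summable_on_SigmaD1[OF P, of x] by simp
  have s: "(\<lambda>y. b x y + b x y * (cmod (u x - u y))\<^sup>2) summable_on UNIV"
    by (intro summable_on_add b_summable s1)
  have "(\<lambda>y. norm (complex_of_real (b x y) * (u x - u y))) summable_on UNIV"
  proof (rule summable_on_comparison_test[OF s])
    fix y
    have d: "cmod (u x - u y) \<le> 1 + (cmod (u x - u y))\<^sup>2"
    proof (cases "cmod (u x - u y) \<le> 1")
      case True thus ?thesis by (smt (verit) zero_le_power2)
    next
      case False thus ?thesis by (smt (verit) power2_eq_square mult_le_cancel_left1)
    qed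
    have "b x y * cmod (u x - u y) \<le> b x y * (1 + (cmod (u x - u y))\<^sup>2)"
      by (rule mult_left_mono[OF d b_nonneg])
    moreover have "norm (complex_of_real (b x y) * (u x - u y)) = b x y * cmod (u x - u y)"
      by (simp only: norm_mult norm_of_real abs_of_nonneg[OF b_nonneg])
    ultimately show "norm (complex_of_real (b x y) * (u x - u y)) \<le> b x y + b x y * (cmod (u x - u y))\<^sup>2"
      by (simp add: algebra_simps)
  qed (simp)
  thus ?thesis using summable_on_iff_abs_summable_on_complex by blast
qed

lemma m_Ltilde: "complex_of_real (m x) * Ltilde m b c u x =
   (\<Sum>\<^sub>\<infinity>y. complex_of_real (b x y) * (u x - u y)) + complex_of_real (c x) * u x"
proof -
  have e1: "complex_of_real (m x) * complex_of_real (1 / m x) = 1"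
    using m_pos[of x] by (simp flip: of_real_mult)
  have "m x * (c x / m x) = c x" using m_pos[of x] by simp
  hence e2: "complex_of_real (m x) * complex_of_real (c x / m x) = complex_of_real (c x)"
    by (simp only: of_real_mult[symmetric])
  show ?thesis unfolding Ltilde_def distrib_left mult.assoc[symmetric] e1 e2 by simp
qed

lemma energy_vec_delta_product:
  "energy_vec m b c u p * cnj (energy_vec m b c (delta_at x) p) =
     (\<lambda>(a,y). if a = x then (if y = x then complex_of_real (2 * c x + 2 * m x) * u x else 0) else 0) p
   + (\<lambda>(a,y). if a = x then complex_of_real (b x y) * (u x - u y) else 0) p
   - (\<lambda>(a,y). if y = x then - (complex_of_real (b x a) * (u x - u a)) else 0) p"
proof -
  obtain a y where p: "p = (a,y)" by force
  have sq1: "complex_of_real (sqrt (2 * c a + 2 * m a)) * complex_of_real (sqrt (2 * c a + 2 * m a))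
      = complex_of_real (2 * c a + 2 * m a)"
    using c_nonneg[of a] m_nonneg[of a] by (simp flip: of_real_mult)
  have sq2: "complex_of_real (sqrt (b a y)) * complex_of_real (sqrt (b a y)) = complex_of_real (b a y)"
    using b_nonneg[of a y] by (simp flip: of_real_mult)
  show ?thesis
  proof (cases "a = y")
    case True
    thus ?thesis using sq1 b_diag[of x] unfolding p energy_vec_def delta_at_def
      by (auto simp: algebra_simps)
  next
    case False
    have "energy_vec m b c u p * cnj (energy_vec m b c (delta_at x) p) =
          complex_of_real (sqrt (b a y)) * complex_of_real (sqrt (b a y)) * (u a - u y) * (delta_at x a - delta_at x y)"
      unfolding p energy_vec_def using False by (simp add: delta_at_def algebra_simps)
    also have "\<dots> = complex_of_real (b a y) * (u a - u y) * (delta_at x a - delta_at x y)" by (simp only: sq2)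
    finally show ?thesis using False b_sym[of a y] unfolding p delta_at_def by (auto simp: algebra_simps)
  qed
qed

lemma energy_inner_delta:
  assumes L: "energy_vec m b c u \<in> L2"
  shows "sqinner (energy_vec m b c u) (energy_vec m b c (delta_at x)) = 2 * complex_of_real (m x) * (Ltilde m b c u x + u x)"
proof -
  define Sx where "Sx = (\<Sum>\<^sub>\<infinity>y. complex_of_real (b x y) * (u x - u y))"
  have row: "((\<lambda>y. complex_of_real (b x y) * (u x - u y)) has_sum Sx) UNIV"
    unfolding Sx_def using row_summable[OF L] by (simp add: has_sum_infsum)
  have "((\<lambda>p. energy_vec m b c u p * cnj (energy_vec m b c (delta_at x) p))
      has_sum (complex_of_real (2 * c x + 2 * m x) * u x + Sx - - Sx)) UNIV"
    unfolding energy_vec_delta_product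
    by (intro has_sum_diff has_sum_add has_sum_row has_sum_column has_sum_point row)
       (simp add: has_sum_uminus row)
  hence "sqinner (energy_vec m b c u) (energy_vec m b c (delta_at x)) = complex_of_real (2 * c x + 2 * m x) * u x + Sx - - Sx"
    unfolding sqinner_def by (simp add: infsumI)
  also have "\<dots> = 2 * (Sx + complex_of_real (c x) * u x) + 2 * complex_of_real (m x) * u x"
    by (simp add: algebra_simps)
  also have "Sx + complex_of_real (c x) * u x = complex_of_real (m x) * Ltilde m b c u x"
    unfolding Sx_def m_Ltilde ..
  finally show ?thesis by (simp add: algebra_simps)
qed

lemma row_sum_delta:
  "((\<lambda>w. complex_of_real (b y w) * (delta_at x y - delta_at x w)) has_sum
     (if y = x then complex_of_real (infsum (b x) UNIV) else - complex_of_real (b y x))) UNIV"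
proof (cases "y = x")
  case True
  have "(\<lambda>w. complex_of_real (b y w) * (delta_at x y - delta_at x w)) = (\<lambda>w. complex_of_real (b x w))"
    using True b_diag[of x] by (auto simp: delta_at_def fun_eq_iff)
  moreover have "((\<lambda>w. complex_of_real (b x w)) has_sum complex_of_real (infsum (b x) UNIV)) UNIV"
    by (rule has_sum_of_real) (use b_summable[of x] in \<open>simp add: has_sum_infsum\<close>)
  ultimately show ?thesis using True by simp
next
  case False
  have "(\<lambda>w. complex_of_real (b y w) * (delta_at x y - delta_at x w)) = (\<lambda>w. if w = x then - complex_of_real (b y x) else 0)"
    using False by (auto simp: delta_at_def fun_eq_iff)
  thus ?thesis using False has_sum_point by simp
qed

lemma m_Ltilde_delta:
  "complex_of_real (m y) * Ltilde m b c (delta_at x) y =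
     (if y = x then complex_of_real (infsum (b x) UNIV + c x) else - complex_of_real (b y x))"
  unfolding m_Ltilde using infsumI[OF row_sum_delta[of y x]]
  by (auto simp: delta_at_def)

lemma inner_l2_delta: "inner_l2 m (delta_at x) u = cnj (u x) * complex_of_real (m x)"
proof -
  have "(\<lambda>y. delta_at x y * cnj (u y) * complex_of_real (m y)) = (\<lambda>y. if y = x then cnj (u x) * complex_of_real (m x) else 0)"
    by (auto simp: delta_at_def fun_eq_iff)
  thus ?thesis unfolding inner_l2_def by (simp only:) (rule infsumI[OF has_sum_point])
qed

lemma Green_delta:
  assumes L: "energy_vec m b c u \<in> L2"
  shows "inner_l2 m (Ltilde m b c (delta_at x)) u = cnj (complex_of_real (m x) * Ltilde m b c u x)"
proof -
  define Sx where "Sx = (\<Sum>\<^sub>\<infinity>y. complex_of_real (b x y) * (u x - u y))"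
  have sec: "((\<lambda>y. complex_of_real (b x y) * (u x - u y)) has_sum Sx) UNIV"
    unfolding Sx_def using row_summable[OF L] by (simp add: has_sum_infsum)
  define d where "d = infsum (b x) UNIV"
  have hb: "((\<lambda>y. complex_of_real (b x y)) has_sum complex_of_real d) UNIV"
    unfolding d_def by (rule has_sum_of_real) (use b_summable[of x] in \<open>simp add: has_sum_infsum\<close>)
  have hA: "((\<lambda>y. complex_of_real (b x y) * cnj (u x) - cnj (complex_of_real (b x y) * (u x - u y)))
              has_sum (complex_of_real d * cnj (u x) - cnj Sx)) UNIV"
    by (intro has_sum_diff has_sum_cmult_left hb) (rule has_sum_cnj_iff[THEN iffD2, OF sec])
  have hB: "((\<lambda>y. if y = x then complex_of_real (d + c x) * cnj (u x) else 0) has_sum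
             complex_of_real (d + c x) * cnj (u x)) UNIV" by (rule has_sum_point)
  have hT: "((\<lambda>y. (if y = x then complex_of_real (d + c x) * cnj (u x) else 0) -
              (complex_of_real (b x y) * cnj (u x) - cnj (complex_of_real (b x y) * (u x - u y))))
          has_sum (complex_of_real (d + c x) * cnj (u x) - (complex_of_real d * cnj (u x) - cnj Sx))) UNIV"
    by (rule has_sum_diff[OF hB hA])
  have eq: "Ltilde m b c (delta_at x) y * cnj (u y) * complex_of_real (m y) =
        (if y = x then complex_of_real (d + c x) * cnj (u x) else 0) -
              (complex_of_real (b x y) * cnj (u x) - cnj (complex_of_real (b x y) * (u x - u y)))" for y
  proof -
    have "Ltilde m b c (delta_at x) y * cnj (u y) * complex_of_real (m y) =
          (complex_of_real (m y) * Ltilde m b c (delta_at x) y) * cnj (u y)" by (simp add: algebra_simps)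
    also have "\<dots> = (if y = x then complex_of_real (d + c x) else - complex_of_real (b y x)) * cnj (u y)"
      unfolding m_Ltilde_delta d_def ..
    finally show ?thesis using b_diag[of x] b_sym[of x y] by (auto simp: algebra_simps)
  qed
  have "inner_l2 m (Ltilde m b c (delta_at x)) u = complex_of_real (d + c x) * cnj (u x) - (complex_of_real d * cnj (u x) - cnj Sx)"
    unfolding inner_l2_def eq using hT by (simp add: infsumI)
  also have "\<dots> = cnj (Sx + complex_of_real (c x) * u x)" by (simp add: algebra_simps)
  also have "Sx + complex_of_real (c x) * u x = complex_of_real (m x) * Ltilde m b c u x"
    unfolding Sx_def m_Ltilde ..
  finally show ?thesis .
qed

lemma Ltilde_Cc_sum:
  assumes "finite S"
  shows "Ltilde m b c (\<lambda>y. \<Sum>x\<in>S. a x * delta_at x y) = (\<lambda>y. \<Sum>x\<in>S. a x * Ltilde m b c (delta_at x) y)"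
proof
  fix y
  define I where "I x = (if y = x then complex_of_real (infsum (b x) UNIV) else - complex_of_real (b y x))" for x
  have "((\<lambda>w. \<Sum>x\<in>S. a x * (complex_of_real (b y w) * (delta_at x y - delta_at x w))) has_sum (\<Sum>x\<in>S. a x * I x)) UNIV"
    by (rule has_sum_finite_sum[OF assms]) (unfold I_def, intro has_sum_cmult_right row_sum_delta)
  moreover have "(\<lambda>w. \<Sum>x\<in>S. a x * (complex_of_real (b y w) * (delta_at x y - delta_at x w))) =
      (\<lambda>w. complex_of_real (b y w) * ((\<Sum>x\<in>S. a x * delta_at x y) - (\<Sum>x\<in>S. a x * delta_at x w)))"
    by (simp add: fun_eq_iff sum_distrib_left sum_subtractf[symmetric] algebra_simps)
  ultimately have e: "(\<Sum>\<^sub>\<infinity>w. complex_of_real (b y w) * ((\<Sum>x\<in>S. a x * delta_at x y) - (\<Sum>x\<in>S. a x * delta_at x w)))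
      = (\<Sum>x\<in>S. a x * I x)" by (simp add: infsumI)
  have e2: "(\<Sum>\<^sub>\<infinity>w. complex_of_real (b y w) * (delta_at x y - delta_at x w)) = I x" for x
    unfolding I_def by (rule infsumI[OF row_sum_delta])
  have alg: "k1 * (\<Sum>x\<in>S. a x * J x) + k2 * (\<Sum>x\<in>S. a x * D x) = (\<Sum>x\<in>S. a x * (k1 * J x + k2 * D x))"
    for k1 k2 :: complex and J D
    by (simp add: sum_distrib_left distrib_left sum.distrib mult.left_commute)
  show "Ltilde m b c (\<lambda>y. \<Sum>x\<in>S. a x * delta_at x y) y = (\<Sum>x\<in>S. a x * Ltilde m b c (delta_at x) y)"
    unfolding Ltilde_def e
    by (subst alg) (simp add: e2)
qed

lemma inner_l2_sum_left:
  assumes "finite S" "\<And>x. x \<in> S \<Longrightarrow> h x \<in> l2 m" "u \<in> l2 m"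
  shows "inner_l2 m (\<lambda>y. \<Sum>x\<in>S. a x * h x y) u = (\<Sum>x\<in>S. a x * inner_l2 m (h x) u)"
proof -
  have "weighted m (\<lambda>y. \<Sum>x\<in>S. a x * h x y) = (\<lambda>i. \<Sum>x\<in>S. a x * weighted m (h x) i)"
    unfolding weighted_def by (simp add: fun_eq_iff sum_distrib_left mult_ac)
  thus ?thesis unfolding inner_l2_weighted
    using sqinner_sum_left[OF assms(1), of "\<lambda>x. weighted m (h x)" "weighted m u" a] assms l2_iff_weighted_L2 by simp
qed

lemma energy_inner_Cc:
  assumes v: "v \<in> Cc" and L: "energy_vec m b c u \<in> L2"
  shows "sqinner (energy_vec m b c v) (energy_vec m b c u) = (\<Sum>x\<in>{x. v x \<noteq> 0}. v x * cnj (sqinner (energy_vec m b c u) (energy_vec m b c (delta_at x))))"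
proof -
  let ?S = "{x. v x \<noteq> 0}"
  have "sqinner (energy_vec m b c v) (energy_vec m b c u) = sqinner (energy_vec m b c (\<lambda>y. \<Sum>x\<in>?S. v x * delta_at x y)) (energy_vec m b c u)"
    using Cc_decomp[OF v] by simp
  also have "\<dots> = (\<Sum>x\<in>?S. v x * sqinner (energy_vec m b c (delta_at x)) (energy_vec m b c u))"
    unfolding energy_vec_sum by (rule sqinner_sum_left[OF Cc_finite[OF v] Cc_energy_vec_L2[OF delta_at_Cc] L])
  finally show ?thesis by (simp add: sqinner_cnj[of "energy_vec m b c u"])
qed

text \<open>Both sides are linear in \<open>v\<close>, so
  it suffices to combine the two point mass identities above.\<close>
lemma Green_formula:
  assumes FC: "FC m b c" and v: "v \<in> Cc" and L: "energy_vec m b c u \<in> L2"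
  shows "inner_l2 m (Ltilde m b c v) u = sqinner (energy_vec m b c v) (energy_vec m b c u) / 2 - inner_l2 m v u"
proof -
  let ?S = "{x. v x \<noteq> 0}"
  have fin: "finite ?S" using Cc_finite[OF v] .
  have uL: "u \<in> l2 m" using QN_dom_iff_energy_vec_L2[THEN iffD2, OF L] unfolding QN_dom_def by auto
  have Ld: "Ltilde m b c (delta_at x) \<in> l2 m" for x using FC[unfolded FC_def] delta_at_Cc by (rule bspec)
  have dl: "delta_at x \<in> l2 m" for x by (rule Cc_l2[OF delta_at_Cc])
  have "inner_l2 m (Ltilde m b c v) u = inner_l2 m (\<lambda>y. \<Sum>x\<in>?S. v x * Ltilde m b c (delta_at x) y) u"
    using Cc_decomp[OF v] Ltilde_Cc_sum[OF fin, of v] by metis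
  also have "\<dots> = (\<Sum>x\<in>?S. v x * cnj (complex_of_real (m x) * Ltilde m b c u x))"
    by (simp add: inner_l2_sum_left[OF fin Ld uL] Green_delta[OF L])
  finally have lhs: "inner_l2 m (Ltilde m b c v) u = (\<Sum>x\<in>?S. v x * cnj (complex_of_real (m x) * Ltilde m b c u x))" .
  have "inner_l2 m v u = inner_l2 m (\<lambda>y. \<Sum>x\<in>?S. v x * delta_at x y) u"
    using Cc_decomp[OF v] by metis
  also have "\<dots> = (\<Sum>x\<in>?S. v x * (cnj (u x) * complex_of_real (m x)))"
    by (simp add: inner_l2_sum_left[OF fin dl uL] inner_l2_delta)
  finally have i2: "inner_l2 m v u = (\<Sum>x\<in>?S. v x * (cnj (u x) * complex_of_real (m x)))" .
  have i3: "sqinner (energy_vec m b c v) (energy_vec m b c u) = (\<Sum>x\<in>?S. v x * cnj (2 * complex_of_real (m x) * (Ltilde m b c u x + u x)))"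
    unfolding energy_inner_Cc[OF v L] energy_inner_delta[OF L] ..
  show ?thesis unfolding lhs i2 i3 sum_divide_distrib sum_subtractf[symmetric]
    by (rule sum.cong) (simp_all add: algebra_simps)
qed

text \<open>Accretivity: \<open>Re \<langle>Ltilde v, v\<rangle> = E(v)/2 - \<parallel>v\<parallel>\<^sup>2 = Re Q(v,v) \<ge> 0\<close> on \<open>C\<^sub>c\<close>.\<close>
lemma Ltilde_Cc_accretive:
  assumes FC: "FC m b c" and v: "v \<in> Cc"
  shows "Re (inner_l2 m (Ltilde m b c v) v) \<ge> 0"
proof -
  have L: "energy_vec m b c v \<in> L2" by (rule Cc_energy_vec_L2[OF v])
  have k: "inner_l2 m (Ltilde m b c v) v = sqinner (energy_vec m b c v) (energy_vec m b c v) / 2 - inner_l2 m v v"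
    by (rule Green_formula[OF FC v L])
  have k2: "inner_l2 m v v = complex_of_real (sqnorm (weighted m v))" by (simp add: inner_l2_weighted sqinner_self)
  have "Re (inner_l2 m (Ltilde m b c v) v) = sqnorm (energy_vec m b c v) / 2 - sqnorm (weighted m v)"
    unfolding k k2 sqinner_self by simp
  thus ?thesis using sqnorm_weighted_le_energy[OF L] by simp
qed
section \<open>Projection onto the energy closure of \<open>C\<^sub>c(V)\<close>\<close>

lemma energy_triangle:
  assumes "energy_vec m b c u \<in> L2" "energy_vec m b c v \<in> L2"
  shows "sqrt (energy (\<lambda>x. u x + v x)) \<le> sqrt (energy u) + sqrt (energy v)"
  using sqnorm_triangle[OF assms] energy_vec_lin[where a=1 and u=u and a'=1 and v=v] by simp

lemma energy_swap: "energy (\<lambda>x. u x - v x) = energy (\<lambda>x. v x - u x)"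
proof -
  have "energy_vec m b c (\<lambda>x. u x - v x) = (\<lambda>i. - energy_vec m b c (\<lambda>x. v x - u x) i)"
    by (simp add: energy_vec_def fun_eq_iff algebra_simps split: prod.splits)
  thus ?thesis by (simp add: sqnorm_uminus)
qed

lemma energy_vec_diff_L2:
  "energy_vec m b c u \<in> L2 \<Longrightarrow> energy_vec m b c v \<in> L2 \<Longrightarrow> energy_vec m b c (\<lambda>x. u x - v x) \<in> L2"
  by (simp add: energy_vec_diff L2_diff)

lemma l2norm_le_energy:
  assumes "energy_vec m b c u \<in> L2"
  shows "l2norm m u \<le> sqrt (energy u)"
  unfolding l2norm_weighted using sqnorm_weighted_le_energy[OF assms] sqnorm_nonneg[of "weighted m u"]
  by (intro real_sqrt_le_mono) linarith

text \<open>A sequence in \<open>C\<^sub>c\<close> with \<open>E(\<phi>\<^sub>n - \<phi>\<^sub>k) \<le> r\<^sub>n + r\<^sub>k\<close>, \<open>r \<rightarrow> 0\<close>, is pointwise Cauchy, since point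
  evaluation is energy-continuous.\<close>
lemma energy_Cauchy_pointwise:
  assumes \<phi>: "\<And>n. \<phi> n \<in> Cc" and r: "r \<longlonglongrightarrow> 0"
    and bound: "\<And>n k. energy (\<lambda>x. \<phi> n x - \<phi> k x) \<le> r n + r k"
  shows "Cauchy (\<lambda>n. \<phi> n x)"
proof (rule CauchyI)
  fix e :: real assume e: "e > 0"
  have "eventually (\<lambda>n. r n < m x * e\<^sup>2) sequentially"
    using order_tendstoD(2)[OF r] m_pos[of x] e by simp
  then obtain N where N: "\<And>n. n \<ge> N \<Longrightarrow> r n < m x * e\<^sup>2"
    unfolding eventually_sequentially by blast
  have "norm (\<phi> n x - \<phi> k x) < e" if "n \<ge> N" "k \<ge> N" for n k
  proof -
    have "energy_vec m b c (\<lambda>x. \<phi> n x - \<phi> k x) \<in> L2"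
      using Cc_energy_vec_L2[OF Cc_diff[OF \<phi> \<phi>]] by (simp add: fun_diff_def)
    hence "(cmod (\<phi> n x - \<phi> k x))\<^sup>2 \<le> energy (\<lambda>x. \<phi> n x - \<phi> k x) / (2 * m x)"
      by (rule pointwise_le_energy)
    also have "\<dots> \<le> (r n + r k) / (2 * m x)"
      using bound[of n k] m_pos[of x] by (intro divide_right_mono) auto
    also have "\<dots> < (m x * e\<^sup>2 + m x * e\<^sup>2) / (2 * m x)"
      using N that m_pos[of x] by (intro divide_strict_right_mono add_strict_mono) auto
    also have "\<dots> = e\<^sup>2" using m_pos[of x] by (simp add: field_simps)
    finally show ?thesis using e by (simp add: power_less_imp_less_base)
  qed
  thus "\<exists>M. \<forall>n\<ge>M. \<forall>k\<ge>M. norm (\<phi> n x - \<phi> k x) < e" by blast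
qed

text \<open>By Fatou's lemma the pointwise limit \<open>p\<close> of such a sequence has \<open>E(\<phi>\<^sub>n - p) \<le> r\<^sub>n\<close>.\<close>
lemma energy_Cauchy_limit:
  assumes \<phi>: "\<And>n. \<phi> n \<in> Cc" and r: "r \<longlonglongrightarrow> 0"
    and bound: "\<And>n k. energy (\<lambda>x. \<phi> n x - \<phi> k x) \<le> r n + r k"
  obtains p where "\<And>n. energy_vec m b c (\<lambda>x. \<phi> n x - p x) \<in> L2"
    and "\<And>n. energy (\<lambda>x. \<phi> n x - p x) \<le> r n"
proof -
  have "convergent (\<lambda>k. \<phi> k x)" for x
    using energy_Cauchy_pointwise[OF \<phi> r bound] Cauchy_convergent_iff by blast
  then obtain p where pw: "\<And>x. (\<lambda>k. \<phi> k x) \<longlonglongrightarrow> p x"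
    unfolding convergent_def by metis
  have "(\<lambda>i. (cmod (energy_vec m b c (\<lambda>x. \<phi> n x - p x) i))\<^sup>2) summable_on UNIV \<and>
        infsum (\<lambda>i. (cmod (energy_vec m b c (\<lambda>x. \<phi> n x - p x) i))\<^sup>2) UNIV \<le> r n" for n
  proof (rule fatou_infsum[where h="\<lambda>k i. (cmod (energy_vec m b c (\<lambda>x. \<phi> n x - \<phi> k x) i))\<^sup>2"
        and C="\<lambda>k. r n + r k"])
    show "(\<lambda>k. r n + r k) \<longlonglongrightarrow> r n" using tendsto_add[OF tendsto_const r] by simp
    show "(\<lambda>k. (cmod (energy_vec m b c (\<lambda>x. \<phi> n x - \<phi> k x) i))\<^sup>2)
        \<longlonglongrightarrow> (cmod (energy_vec m b c (\<lambda>x. \<phi> n x - p x) i))\<^sup>2" for i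
      by (intro tendsto_intros energy_vec_tendsto pw)
    show "(\<lambda>i. (cmod (energy_vec m b c (\<lambda>x. \<phi> n x - \<phi> k x) i))\<^sup>2) summable_on UNIV \<and>
        infsum (\<lambda>i. (cmod (energy_vec m b c (\<lambda>x. \<phi> n x - \<phi> k x) i))\<^sup>2) UNIV \<le> r n + r k" for k
      using Cc_energy_vec_L2[OF Cc_diff[OF \<phi> \<phi>], of n k] bound[of n k]
      unfolding L2_def sqnorm_def by (simp add: fun_diff_def)
  qed simp
  with that show thesis unfolding L2_def sqnorm_def by blast
qed

text \<open>Functions in \<open>D(Q\<^sup>(\<^sup>N\<^sup>))\<close> approximable by \<open>C\<^sub>c\<close> in energy belong to \<open>D(Q\<^sup>(\<^sup>D\<^sup>))\<close>: energy
  dominates both the \<open>\<ell>\<^sup>2\<close> norm and \<open>Q\<close>.\<close>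
lemma energy_approx_imp_QD_dom:
  assumes f: "f \<in> QN_dom m b c" and \<phi>: "\<And>n. \<phi> n \<in> Cc"
    and lim: "(\<lambda>n. energy (\<lambda>x. f x - \<phi> n x)) \<longlonglongrightarrow> 0"
  shows "f \<in> QD_dom m b c"
proof -
  have fl2: "f \<in> l2 m" using f unfolding QN_dom_def by auto
  have L: "energy_vec m b c (\<lambda>x. f x - \<phi> n x) \<in> L2" for n
    using f QN_dom_iff_energy_vec_L2 Cc_energy_vec_L2[OF \<phi>] by (blast intro: energy_vec_diff_L2)
  have conv: "(\<lambda>n. l2norm m (\<phi> n - f)) \<longlonglongrightarrow> 0"
  proof (rule Lim_null_comparison[OF always_eventually])
    show "\<forall>n. norm (l2norm m (\<phi> n - f)) \<le> sqrt (energy (\<lambda>x. f x - \<phi> n x))"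
    proof
      fix n
      have "norm (l2norm m (\<phi> n - f)) = l2norm m (\<lambda>x. f x - \<phi> n x)"
        using infsum_nonneg[of UNIV "\<lambda>x. (cmod (f x - \<phi> n x))\<^sup>2 * m x"] m_nonneg
        by (simp add: l2norm_def norm_minus_commute)
      also have "\<dots> \<le> sqrt (energy (\<lambda>x. f x - \<phi> n x))" by (rule l2norm_le_energy[OF L])
      finally show "norm (l2norm m (\<phi> n - f)) \<le> sqrt (energy (\<lambda>x. f x - \<phi> n x))" .
    qed
    show "(\<lambda>n. sqrt (energy (\<lambda>x. f x - \<phi> n x))) \<longlonglongrightarrow> 0"
      using tendsto_real_sqrt[OF lim] by simp
  qed
  have "\<exists>N. \<forall>k\<ge>N. \<forall>l\<ge>N. Re (QN_val b c (\<phi> k - \<phi> l) (\<phi> k - \<phi> l)) < \<epsilon>" if \<epsilon>: "\<epsilon> > 0" for \<epsilon>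
  proof -
    obtain N where N: "\<And>n. n \<ge> N \<Longrightarrow> energy (\<lambda>x. f x - \<phi> n x) < \<epsilon> / 4"
      using order_tendstoD(2)[OF lim, of "\<epsilon> / 4"] \<epsilon> unfolding eventually_sequentially by auto
    have "Re (QN_val b c (\<phi> k - \<phi> l) (\<phi> k - \<phi> l)) < \<epsilon>" if "k \<ge> N" "l \<ge> N" for k l
    proof -
      have split: "energy_vec m b c (\<phi> k - \<phi> l)
          = (\<lambda>i. energy_vec m b c (\<lambda>x. f x - \<phi> l x) i + - energy_vec m b c (\<lambda>x. f x - \<phi> k x) i)"
        by (auto simp: energy_vec_def fun_eq_iff algebra_simps)
      have "Re (QN_val b c (\<phi> k - \<phi> l) (\<phi> k - \<phi> l)) \<le> energy (\<phi> k - \<phi> l)"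
        by (rule Re_QN_val_le_energy[OF Cc_energy_vec_L2[OF Cc_diff[OF \<phi> \<phi>]]])
      also have "\<dots> \<le> 2 * energy (\<lambda>x. f x - \<phi> l x) + 2 * energy (\<lambda>x. f x - \<phi> k x)"
        unfolding split using sqnorm_add_le[OF L L2_uminus[OF L]] by (simp add: sqnorm_uminus)
      also have "\<dots> < \<epsilon>" using N[of k] N[of l] that by linarith
      finally show ?thesis .
    qed
    thus ?thesis by blast
  qed
  hence "approx_seq m b c \<phi> f" unfolding approx_seq_def using fl2 \<phi> conv by blast
  thus ?thesis unfolding QD_dom_def using fl2 by blast
qed

lemma Cc_minimizing_sequence:
  obtains \<phi> \<delta> where "\<And>n. \<phi> n \<in> Cc" and "\<And>\<psi>. \<psi> \<in> Cc \<Longrightarrow> \<delta> \<le> energy (\<lambda>x. f x - \<psi> x)"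
    and "(\<lambda>n. energy (\<lambda>x. f x - \<phi> n x)) \<longlonglongrightarrow> \<delta>"
proof -
  define A where "A = {energy (\<lambda>x. f x - \<psi> x) | \<psi>. \<psi> \<in> Cc}"
  define \<delta> where "\<delta> = Inf A"
  have "(\<lambda>_. 0) \<in> Cc" by (simp add: Cc_def)
  hence Ane: "A \<noteq> {}" unfolding A_def by blast
  have Abd: "bdd_below A" unfolding A_def by (auto intro!: bdd_belowI[of _ 0] sqnorm_nonneg)
  have low: "\<delta> \<le> energy (\<lambda>x. f x - \<psi> x)" if "\<psi> \<in> Cc" for \<psi>
    unfolding \<delta>_def by (rule cInf_lower[OF _ Abd]) (use that in \<open>auto simp: A_def\<close>)
  have "\<exists>\<phi>. \<phi> \<in> Cc \<and> energy (\<lambda>x. f x - \<phi> x) < \<delta> + 1 / real (Suc n)" for n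
    using cInf_lessD[OF Ane, of "\<delta> + 1 / real (Suc n)"] unfolding \<delta>_def A_def by auto
  then obtain \<phi> where \<phi>: "\<And>n. \<phi> n \<in> Cc" and \<phi>E: "\<And>n. energy (\<lambda>x. f x - \<phi> n x) < \<delta> + 1 / real (Suc n)"
    by metis
  have "(\<lambda>n. energy (\<lambda>x. f x - \<phi> n x)) \<longlonglongrightarrow> \<delta>"
  proof (rule tendsto_sandwich[OF always_eventually always_eventually])
    show "\<forall>n. \<delta> \<le> energy (\<lambda>x. f x - \<phi> n x)" using low \<phi> by blast
    show "\<forall>n. energy (\<lambda>x. f x - \<phi> n x) \<le> \<delta> + 1 / real (Suc n)" using \<phi>E less_imp_le by blast
    show "(\<lambda>n. \<delta>) \<longlonglongrightarrow> \<delta>" by simp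
    show "(\<lambda>n. \<delta> + 1 / real (Suc n)) \<longlonglongrightarrow> \<delta>"
      using tendsto_add[OF tendsto_const LIMSEQ_inverse_real_of_nat] by (simp add: inverse_eq_divide)
  qed
  with \<phi> low that show thesis by blast
qed

text \<open>Parallelogram law: two nearly minimizing elements of \<open>C\<^sub>c\<close> are close in energy, because
  their midpoint lies in \<open>C\<^sub>c\<close> as well.\<close>
lemma minimizing_pair_close:
  assumes f: "f \<in> QN_dom m b c" and low: "\<And>\<psi>. \<psi> \<in> Cc \<Longrightarrow> \<delta> \<le> energy (\<lambda>x. f x - \<psi> x)"
    and \<phi>: "\<phi> \<in> Cc" and \<phi>': "\<phi>' \<in> Cc"
  shows "energy (\<lambda>x. \<phi> x - \<phi>' x) \<le> 2 * (energy (\<lambda>x. f x - \<phi> x) - \<delta>) + 2 * (energy (\<lambda>x. f x - \<phi>' x) - \<delta>)"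
proof -
  let ?w = "energy_vec m b c (\<lambda>x. f x - \<phi> x)" and ?h = "energy_vec m b c (\<lambda>x. f x - \<phi>' x)"
  have fL: "energy_vec m b c f \<in> L2" using f QN_dom_iff_energy_vec_L2 by blast
  have wL: "?w \<in> L2" and hL: "?h \<in> L2"
    using energy_vec_diff_L2[OF fL Cc_energy_vec_L2[OF \<phi>]] energy_vec_diff_L2[OF fL Cc_energy_vec_L2[OF \<phi>']]
    by auto
  define \<psi> where "\<psi> = (\<lambda>x. (1/2) * \<phi> x + (1/2) * \<phi>' x)"
  have \<psi>: "\<psi> \<in> Cc" unfolding \<psi>_def by (rule Cc_lin[OF \<phi> \<phi>'])
  have "(\<lambda>i. ?w i + ?h i) = (\<lambda>i. 2 * energy_vec m b c (\<lambda>x. f x - \<psi> x) i)"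
    unfolding \<psi>_def energy_vec_def by (auto simp: fun_eq_iff algebra_simps)
  hence "sqnorm (\<lambda>i. ?w i + ?h i) = 4 * energy (\<lambda>x. f x - \<psi> x)"
    by (simp add: sqnorm_def norm_mult power_mult_distrib infsum_cmult_right')
  also have "\<dots> \<ge> 4 * \<delta>" using low[OF \<psi>] by simp
  finally have "4 * \<delta> \<le> sqnorm (\<lambda>i. ?w i + ?h i)" .
  moreover have "(\<lambda>i. ?w i - ?h i) = (\<lambda>i. - energy_vec m b c (\<lambda>x. \<phi> x - \<phi>' x) i)"
    unfolding energy_vec_def by (auto simp: fun_eq_iff algebra_simps)
  ultimately show ?thesis using parallelogram[OF wL hL] by (simp add: sqnorm_uminus)
qed

text \<open>Passing to the limit in the triangle inequality for \<open>\<surd>E\<close>: if \<open>E(f - \<phi>\<^sub>n) \<rightarrow> \<delta>\<close> and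
  \<open>E(\<phi>\<^sub>n - p) \<rightarrow> 0\<close>, then \<open>E(f - p) \<le> \<delta>\<close> \<dots>\<close>
lemma residual_energy_le:
  assumes fL: "\<And>n. energy_vec m b c (\<lambda>x. f x - \<phi> n x) \<in> L2"
    and pL: "\<And>n. energy_vec m b c (\<lambda>x. \<phi> n x - p x) \<in> L2"
    and lim: "(\<lambda>n. energy (\<lambda>x. f x - \<phi> n x)) \<longlonglongrightarrow> \<delta>"
    and pE: "(\<lambda>n. energy (\<lambda>x. \<phi> n x - p x)) \<longlonglongrightarrow> 0"
  shows "energy (\<lambda>x. f x - p x) \<le> \<delta>"
proof -
  have "sqrt (energy (\<lambda>x. f x - p x)) \<le> sqrt \<delta>"
  proof (rule LIMSEQ_le_const)
    show "(\<lambda>n. sqrt (energy (\<lambda>x. f x - \<phi> n x)) + sqrt (energy (\<lambda>x. \<phi> n x - p x))) \<longlonglongrightarrow> sqrt \<delta>"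
      using tendsto_add[OF tendsto_real_sqrt[OF lim] tendsto_real_sqrt[OF pE]] by simp
    show "\<exists>N. \<forall>n\<ge>N. sqrt (energy (\<lambda>x. f x - p x))
        \<le> sqrt (energy (\<lambda>x. f x - \<phi> n x)) + sqrt (energy (\<lambda>x. \<phi> n x - p x))"
    proof (intro exI allI impI)
      fix n
      have "(\<lambda>x. f x - \<phi> n x + (\<phi> n x - p x)) = (\<lambda>x. f x - p x)" by (simp add: fun_eq_iff)
      thus "sqrt (energy (\<lambda>x. f x - p x))
          \<le> sqrt (energy (\<lambda>x. f x - \<phi> n x)) + sqrt (energy (\<lambda>x. \<phi> n x - p x))"
        using energy_triangle[OF fL pL, of n n] by simp
    qed
  qed
  thus ?thesis by simp
qed

text \<open>\<dots> and, if moreover \<open>\<delta>\<close> bounds \<open>E(f - \<psi>)\<close> for all \<open>\<psi> \<in> C\<^sub>c\<close> and \<open>\<phi>\<^sub>n \<in> C\<^sub>c\<close>, then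
  \<open>\<delta> \<le> E(f - p + \<psi>)\<close> for every \<open>\<psi> \<in> C\<^sub>c\<close>, using \<open>f - (\<phi>\<^sub>n - \<psi>) = (f - p + \<psi>) + (p - \<phi>\<^sub>n)\<close>.\<close>
lemma residual_energy_ge:
  assumes low: "\<And>\<psi>. \<psi> \<in> Cc \<Longrightarrow> \<delta> \<le> energy (\<lambda>x. f x - \<psi> x)" and \<phi>: "\<And>n. \<phi> n \<in> Cc"
    and pL: "\<And>n. energy_vec m b c (\<lambda>x. \<phi> n x - p x) \<in> L2"
    and pE: "(\<lambda>n. energy (\<lambda>x. \<phi> n x - p x)) \<longlonglongrightarrow> 0"
    and \<psi>: "\<psi> \<in> Cc" and gL: "energy_vec m b c (\<lambda>x. f x - p x + \<psi> x) \<in> L2"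
  shows "\<delta> \<le> energy (\<lambda>x. f x - p x + \<psi> x)"
proof -
  have "sqrt \<delta> \<le> sqrt (energy (\<lambda>x. f x - p x + \<psi> x))"
  proof (rule LIMSEQ_le_const)
    show "(\<lambda>n. sqrt (energy (\<lambda>x. f x - p x + \<psi> x)) + sqrt (energy (\<lambda>x. p x - \<phi> n x)))
        \<longlonglongrightarrow> sqrt (energy (\<lambda>x. f x - p x + \<psi> x))"
      using tendsto_add[OF tendsto_const tendsto_real_sqrt[OF pE]] by (simp add: energy_swap[of p])
    have "sqrt \<delta> \<le> sqrt (energy (\<lambda>x. f x - p x + \<psi> x)) + sqrt (energy (\<lambda>x. p x - \<phi> n x))" for n
    proof -
      have "\<delta> \<le> energy (\<lambda>x. f x - (1 * \<phi> n x + (- 1) * \<psi> x))" by (rule low[OF Cc_lin[OF \<phi> \<psi>]])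
      also have "(\<lambda>x. f x - (1 * \<phi> n x + (- 1) * \<psi> x)) = (\<lambda>x. (f x - p x + \<psi> x) + (p x - \<phi> n x))"
        by (simp add: fun_eq_iff algebra_simps)
      finally have "sqrt \<delta> \<le> sqrt (energy (\<lambda>x. (f x - p x + \<psi> x) + (p x - \<phi> n x)))"
        by (rule real_sqrt_le_mono)
      also have "\<dots> \<le> sqrt (energy (\<lambda>x. f x - p x + \<psi> x)) + sqrt (energy (\<lambda>x. p x - \<phi> n x))"
        using pL[of n] by (intro energy_triangle gL) (simp add: energy_vec_diff L2_def norm_minus_commute)
      finally show ?thesis .
    qed
    thus "\<exists>N. \<forall>n\<ge>N. sqrt \<delta> \<le> sqrt (energy (\<lambda>x. f x - p x + \<psi> x)) + sqrt (energy (\<lambda>x. p x - \<phi> n x))"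
      by blast
  qed
  thus ?thesis by simp
qed

text \<open>The projection: there is \<open>g = f - p\<close>, \<open>p\<close> in the energy closure of \<open>C\<^sub>c\<close>, whose energy is
  not decreased by adding any \<open>t\<psi>\<close>, \<open>\<psi> \<in> C\<^sub>c\<close>.\<close>
lemma energy_projection:
  assumes f: "f \<in> QN_dom m b c"
  obtains g where "energy_vec m b c g \<in> L2"
    and "\<And>\<psi> t. \<psi> \<in> Cc \<Longrightarrow> energy g \<le> energy (\<lambda>x. g x + t * \<psi> x)"
    and "energy g = 0 \<Longrightarrow> f \<in> QD_dom m b c"
proof -
  obtain \<phi> \<delta> where \<phi>: "\<And>n. \<phi> n \<in> Cc" and low: "\<And>\<psi>. \<psi> \<in> Cc \<Longrightarrow> \<delta> \<le> energy (\<lambda>x. f x - \<psi> x)"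
    and lim: "(\<lambda>n. energy (\<lambda>x. f x - \<phi> n x)) \<longlonglongrightarrow> \<delta>"
    using Cc_minimizing_sequence[where f = f] by blast
  define a where "a n = energy (\<lambda>x. f x - \<phi> n x) - \<delta>" for n
  have a0: "a \<longlonglongrightarrow> 0" unfolding a_def by (rule LIM_zero[OF lim])
  have a: "(\<lambda>n. 2 * a n) \<longlonglongrightarrow> 0" using tendsto_mult_left[OF a0, of 2] by simp
  have close: "energy (\<lambda>x. \<phi> n x - \<phi> k x) \<le> 2 * a n + 2 * a k" for n k
    using minimizing_pair_close[OF f low \<phi> \<phi>] unfolding a_def by simp
  obtain p where pL: "\<And>n. energy_vec m b c (\<lambda>x. \<phi> n x - p x) \<in> L2"
    and pE: "\<And>n. energy (\<lambda>x. \<phi> n x - p x) \<le> 2 * a n"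
    using energy_Cauchy_limit[where \<phi> = \<phi>, OF \<phi> a close] by blast
  have pE0: "(\<lambda>n. energy (\<lambda>x. \<phi> n x - p x)) \<longlonglongrightarrow> 0"
  proof (rule tendsto_sandwich[OF always_eventually always_eventually])
    show "\<forall>n. 0 \<le> energy (\<lambda>x. \<phi> n x - p x)" by (simp add: sqnorm_nonneg)
    show "\<forall>n. energy (\<lambda>x. \<phi> n x - p x) \<le> 2 * a n" using pE by blast
  qed (simp_all add: a)
  define g where "g x = f x - p x" for x
  have fL: "energy_vec m b c (\<lambda>x. f x - \<phi> n x) \<in> L2" for n
    using f QN_dom_iff_energy_vec_L2 Cc_energy_vec_L2[OF \<phi>] by (blast intro: energy_vec_diff_L2)
  have "energy_vec m b c g
      = (\<lambda>i. energy_vec m b c (\<lambda>x. f x - \<phi> 0 x) i + energy_vec m b c (\<lambda>x. \<phi> 0 x - p x) i)"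
    unfolding g_def energy_vec_def by (auto simp: fun_eq_iff algebra_simps)
  hence gL: "energy_vec m b c g \<in> L2" using L2_add[OF fL[of 0] pL[of 0]] by simp
  have upper: "energy g \<le> \<delta>" unfolding g_def by (rule residual_energy_le[OF fL pL lim pE0])
  have lower: "\<delta> \<le> energy (\<lambda>x. g x + t * \<psi> x)" if \<psi>: "\<psi> \<in> Cc" for \<psi> t
  proof -
    have "(\<lambda>x. t * \<psi> x) \<in> Cc" using Cc_lin[OF \<psi> \<psi>, of t 0] by simp
    moreover have "energy_vec m b c (\<lambda>x. g x + t * \<psi> x) \<in> L2"
      using L2_add[OF gL L2_cmult[OF Cc_energy_vec_L2[OF \<psi>]]]
      by (simp add: energy_vec_lin[where a=1, simplified])
    ultimately show ?thesis
      using residual_energy_ge[OF low \<phi> pL pE0, of "\<lambda>x. t * \<psi> x"] unfolding g_def by simp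
  qed
  show thesis
  proof (rule that[OF gL])
    show "energy g \<le> energy (\<lambda>x. g x + t * \<psi> x)" if "\<psi> \<in> Cc" for \<psi> t
      using upper lower[OF that, of t] by linarith
    assume "energy g = 0"
    hence "\<delta> = 0" using upper lower[of "\<lambda>_. 0" 0] unfolding Cc_def by auto
    thus "f \<in> QD_dom m b c" using energy_approx_imp_QD_dom[OF f \<phi>] lim by simp
  qed
qed

lemma nonzero_orthogonal_residual:
  assumes f: "f \<in> QN_dom m b c" and nf: "f \<notin> QD_dom m b c"
  obtains g where "energy_vec m b c g \<in> L2" and "energy g > 0"
    and "\<And>x. sqinner (energy_vec m b c g) (energy_vec m b c (delta_at x)) = 0"
proof -
  obtain g where gL: "energy_vec m b c g \<in> L2"
    and min: "\<And>\<psi> t. \<psi> \<in> Cc \<Longrightarrow> energy g \<le> energy (\<lambda>x. g x + t * \<psi> x)"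
    and zero: "energy g = 0 \<Longrightarrow> f \<in> QD_dom m b c"
    using energy_projection[OF f] by blast
  have "energy g > 0" using zero nf sqnorm_nonneg[of "energy_vec m b c g"] by fastforce
  moreover have "sqinner (energy_vec m b c g) (energy_vec m b c (delta_at x)) = 0" for x
  proof (rule sqinner_eq_0_if_minimal[OF gL Cc_energy_vec_L2[OF delta_at_Cc]])
    show "energy g \<le> sqnorm (\<lambda>i. energy_vec m b c g i + t * energy_vec m b c (delta_at x) i)" for t
      using min[OF delta_at_Cc[of x], of t] energy_vec_lin[where a=1 and u=g and a'=t and v="delta_at x"] by simp
  qed
  ultimately show thesis using that gL by blast
qed

section \<open>Part 2: \<open>Ltilde\<close> restricted to \<open>C\<^sub>c(V)\<close> is not essentially selfadjoint\<close>

lemma inner_l2_tendsto: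
  assumes aL: "\<And>n. a n \<in> l2 m" and a0: "a0 \<in> l2 m" and hL: "\<And>n. h n \<in> l2 m" and h0: "h0 \<in> l2 m"
    and ca: "(\<lambda>n. l2norm m (a n - a0)) \<longlonglongrightarrow> 0" and ch: "(\<lambda>n. l2norm m (h n - h0)) \<longlonglongrightarrow> 0"
  shows "(\<lambda>n. inner_l2 m (a n) (h n)) \<longlonglongrightarrow> inner_l2 m a0 h0"
proof -
  have e: "l2norm m (u - v) = sqrt (sqnorm (\<lambda>i. weighted m u i - weighted m v i))" for u v
    unfolding l2norm_weighted by (simp add: weighted_def algebra_simps)
  show ?thesis unfolding inner_l2_weighted
    by (rule sqinner_tendsto) (use aL a0 hL h0 ca ch l2_iff_weighted_L2 e in auto)
qed

lemma graph_closure_CcE: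
  assumes "(u, z) \<in> graph_closure m (Cc_graph m b c)"
  obtains \<phi> where "\<And>n. \<phi> n \<in> Cc" and "u \<in> l2 m" and "z \<in> l2 m"
    and "(\<lambda>n. l2norm m (\<phi> n - u)) \<longlonglongrightarrow> 0" and "(\<lambda>n. l2norm m (Ltilde m b c (\<phi> n) - z)) \<longlonglongrightarrow> 0"
proof -
  obtain s where u: "u \<in> l2 m" and z: "z \<in> l2 m" and sG: "\<And>n. s n \<in> Cc_graph m b c"
    and cu: "(\<lambda>n. l2norm m (fst (s n) - u)) \<longlonglongrightarrow> 0" and cz: "(\<lambda>n. l2norm m (snd (s n) - z)) \<longlonglongrightarrow> 0"
    using assms unfolding graph_closure_def by auto
  have "fst (s n) \<in> Cc \<and> snd (s n) = Ltilde m b c (fst (s n))" for n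
    using sG[of n] unfolding Cc_graph_def by auto
  thus thesis using that[of "\<lambda>n. fst (s n)"] u z cu cz by simp
qed

lemma graph_closure_accretive:
  assumes FC: "FC m b c" and uz: "(u, z) \<in> graph_closure m (Cc_graph m b c)"
  shows "Re (inner_l2 m z u) \<ge> 0"
proof -
  obtain \<phi> where \<phi>: "\<And>n. \<phi> n \<in> Cc" and u: "u \<in> l2 m" and z: "z \<in> l2 m"
    and cu: "(\<lambda>n. l2norm m (\<phi> n - u)) \<longlonglongrightarrow> 0" and cz: "(\<lambda>n. l2norm m (Ltilde m b c (\<phi> n) - z)) \<longlonglongrightarrow> 0"
    using graph_closure_CcE[OF uz] by blast
  have "(\<lambda>n. inner_l2 m (Ltilde m b c (\<phi> n)) (\<phi> n)) \<longlonglongrightarrow> inner_l2 m z u"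
    by (rule inner_l2_tendsto[OF _ z _ u cz cu]) (use FC \<phi> Cc_l2 in \<open>auto simp only: FC_def\<close>)
  from tendsto_Re[OF this] show ?thesis
    by (rule LIMSEQ_le_const) (use Ltilde_Cc_accretive[OF FC \<phi>] in auto)
qed

text \<open>The residual \<open>g\<close> of the projection satisfies \<open>\<langle>Ltilde \<phi>, g\<rangle> = \<langle>\<phi>, -g\<rangle>\<close> for \<open>\<phi> \<in> C\<^sub>c\<close> by Green's
  formula, and this passes to the closure: \<open>(g, -g)\<close> lies in its adjoint.\<close>
lemma residual_in_adjoint:
  assumes FC: "FC m b c" and gL: "energy_vec m b c g \<in> L2"
    and orth: "\<And>x. sqinner (energy_vec m b c g) (energy_vec m b c (delta_at x)) = 0"
  shows "(g, (\<lambda>x. - g x)) \<in> graph_adjoint m (graph_closure m (Cc_graph m b c))"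
proof -
  have g: "g \<in> l2 m" and ng: "(\<lambda>x. - g x) \<in> l2 m"
    using gL QN_dom_iff_energy_vec_L2 unfolding QN_dom_def l2_def by auto
  have inner_neg: "inner_l2 m v (\<lambda>x. - g x) = - inner_l2 m v g" for v
    unfolding inner_l2_def by (simp add: infsum_uminus)
  have green: "inner_l2 m (Ltilde m b c \<phi>) g = inner_l2 m \<phi> (\<lambda>x. - g x)" if \<phi>: "\<phi> \<in> Cc" for \<phi>
  proof -
    have "sqinner (energy_vec m b c \<phi>) (energy_vec m b c g) = 0"
      unfolding energy_inner_Cc[OF \<phi> gL] orth by simp
    thus ?thesis unfolding Green_formula[OF FC \<phi> gL] inner_neg by simp
  qed
  have "inner_l2 m z g = inner_l2 m u (\<lambda>x. - g x)" if uz: "(u, z) \<in> graph_closure m (Cc_graph m b c)" for u z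
  proof -
    obtain \<phi> where \<phi>: "\<And>n. \<phi> n \<in> Cc" and u: "u \<in> l2 m" and z: "z \<in> l2 m"
      and cu: "(\<lambda>n. l2norm m (\<phi> n - u)) \<longlonglongrightarrow> 0" and cz: "(\<lambda>n. l2norm m (Ltilde m b c (\<phi> n) - z)) \<longlonglongrightarrow> 0"
      using graph_closure_CcE[OF uz] by blast
    have const: "(\<lambda>n. l2norm m (w - w)) \<longlonglongrightarrow> 0" for w by (simp add: l2norm_def)
    have "(\<lambda>n. inner_l2 m (Ltilde m b c (\<phi> n)) g) \<longlonglongrightarrow> inner_l2 m z g"
      by (rule inner_l2_tendsto[OF _ z _ g cz const]) (use FC \<phi> g in \<open>auto simp only: FC_def\<close>)
    moreover have "(\<lambda>n. inner_l2 m (\<phi> n) (\<lambda>x. - g x)) \<longlonglongrightarrow> inner_l2 m u (\<lambda>x. - g x)"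
      by (rule inner_l2_tendsto[OF _ u _ ng cu const]) (use \<phi> Cc_l2 ng in auto)
    moreover have "(\<lambda>n. inner_l2 m (Ltilde m b c (\<phi> n)) g) = (\<lambda>n. inner_l2 m (\<phi> n) (\<lambda>x. - g x))"
      using green \<phi> by simp
    ultimately show ?thesis using LIMSEQ_unique by metis
  qed
  thus ?thesis unfolding graph_adjoint_def using g ng by auto
qed

text \<open>Part 2: if \<open>f \<in> D(Q\<^sup>(\<^sup>N\<^sup>)) \<setminus> D(Q\<^sup>(\<^sup>D\<^sup>))\<close> and (FC) holds, the nonzero residual \<open>g\<close> gives
  \<open>(g, -g)\<close> in the adjoint; essential selfadjointness would put it into the closure, where
  accretivity forces \<open>Re \<langle>-g, g\<rangle> = -\<parallel>g\<parallel>\<^sup>2 \<ge> 0\<close>, i.e. \<open>g = 0\<close>.\<close>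
lemma not_essentially_selfadjoint:
  assumes FC: "FC m b c" and f: "f \<in> QN_dom m b c" and nf: "f \<notin> QD_dom m b c"
  shows "\<not> essentially_selfadjoint m (Cc_graph m b c)"
proof
  assume ess: "essentially_selfadjoint m (Cc_graph m b c)"
  obtain g where gL: "energy_vec m b c g \<in> L2" and pos: "energy g > 0"
    and orth: "\<And>x. sqinner (energy_vec m b c g) (energy_vec m b c (delta_at x)) = 0"
    using nonzero_orthogonal_residual[OF f nf] by blast
  have "(g, (\<lambda>x. - g x)) \<in> graph_closure m (Cc_graph m b c)"
    using residual_in_adjoint[OF FC gL orth] ess unfolding essentially_selfadjoint_def by simp
  hence "Re (inner_l2 m (\<lambda>x. - g x) g) \<ge> 0" by (rule graph_closure_accretive[OF FC])
  moreover have wL: "weighted m g \<in> L2"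
    using gL QN_dom_iff_energy_vec_L2 l2_iff_weighted_L2 unfolding QN_dom_def by auto
  moreover have "inner_l2 m (\<lambda>x. - g x) g = - complex_of_real (sqnorm (weighted m g))"
  proof -
    have "weighted m (\<lambda>x. - g x) = (\<lambda>i. (-1) * weighted m g i)" by (simp add: weighted_def fun_eq_iff)
    thus ?thesis unfolding inner_l2_weighted using sqinner_cmult_left[OF wL wL, of "-1"] by (simp add: sqinner_self)
  qed
  ultimately have "sqnorm (weighted m g) = 0" using sqnorm_nonneg[of "weighted m g"] by simp
  hence "g x = 0" for x using sqnorm_eq_0D[OF wL, of x] m_pos[of x] by (simp add: weighted_def)
  hence "energy_vec m b c g = (\<lambda>i. 0)" unfolding energy_vec_def by (auto simp: fun_eq_iff)
  with pos show False by (simp add: sqnorm_def)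
qed

end

theorem mainTheorem12:
  fixes m :: "'v::countable \<Rightarrow> real" and b :: "'v \<Rightarrow> 'v \<Rightarrow> real" and c :: "'v \<Rightarrow> real"
  assumes "graph_over m b c"
    and "connected_graph b"
    and "\<exists>f \<in> QN_dom m b c. u_infty b f \<noteq> (\<lambda>_. 0)"
  shows "QN_form m b c \<noteq> QD_form m b c
         \<and> (FC m b c \<longrightarrow> \<not> essentially_selfadjoint m (Cc_graph m b c))"
proof -
  obtain f where f: "f \<in> QN_dom m b c" and f_boundary: "u_infty b f \<noteq> (\<lambda>_. 0)"
    using assms(3) by blast
  have nf: "f \<notin> QD_dom m b c"
    using u_infty_QD_dom[OF assms(1,2)] f_boundary by blast
  show ?thesis
    using QN_form_neq_QD_form[OF f nf] not_essentially_selfadjoint[OF assms(1) _ f nf] by blast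
qed

end
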